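(* Let $\Omega$ be a holomorphic one-form on an open ball $U\subset\mathbb{C}^{2m}$ centered at $0$ containing the closed unit ball $B^{4m}[0,1]$, such that $\Omega\cdot\vec R=0$ where $\vec R=\sum_{j=1}^{2m}z_j\,\partial/\partial z_j$, such that $\operatorname{Ker}(\Omega)$ is transverse to $S^{4m-1}(1)$, and such that the origin is the only zero of $\Omega$ in $B^{4m}[0,1]$. Let $A=(a_{ij})$ be the matrix for which the linear part of $\Omega$ at $0$ equals $\Omega_A=\sum_{i,j}a_{ij}z_i\,dz_j$, and assume $A$ is nonsingular. Set $\Omega^t(z)=t^{-1}\Omega(tz)$ for $t\in(0,1]$ and $\Omega^0=\Omega_A$. Then $\{\operatorname{Ker}(\Omega^t)\}_{t\in[0,1]}$ is a real analytic deformation of $\operatorname{Ker}(\Omega)=\operatorname{Ker}(\Omega^1)$ into $\operatorname{Ker}(\Omega_A)$ by holomorphic distributions $\operatorname{Ker}(\Omega^t)$, each of which is transverse to $S^{4m-1}(1)$ outside $S^{4m-1}(1)\cap\operatorname{sing}(\Omega^t)$.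
   Context: $\operatorname{sing}(\Omega^t)$ denotes the zero set of $\Omega^t$. $S^{4m-1}(1)$ is the unit sphere in $\mathbb{C}^{2m}$. *)

theory Defs
  imports "HOL-Analysis.Analysis"
begin

text \<open>A holomorphic one-form on an open set of C^N is encoded by its coefficient
  vector field: Omega = sum_j (w z)$j dz_j, with w :: complex^'n => complex^'n.\<close>

definition oneform_apply :: "complex ^ 'n \<Rightarrow> complex ^ 'n \<Rightarrow> complex" where
  "oneform_apply w v = (\<Sum>j\<in>UNIV. w $ j * v $ j)"

definition holomorphic_several ::
  "(complex ^ 'n) set \<Rightarrow> (complex ^ 'n \<Rightarrow> complex ^ 'm) \<Rightarrow> bool" where
  "holomorphic_several U f \<longleftrightarrow>
     (\<forall>z\<in>U. \<exists>L. (f has_derivative L) (at z) \<and> (\<forall>(c::complex) v. L (c *s v) = c *s L v))"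

definition oneform_kernel :: "complex ^ 'n \<Rightarrow> (complex ^ 'n) set" where
  "oneform_kernel w = {v. oneform_apply w v = 0}"

definition sphere_tangent :: "complex ^ 'n \<Rightarrow> (complex ^ 'n) set" where
  "sphere_tangent z = {v. inner v z = 0}"

definition transverse_sphere_at :: "complex ^ 'n \<Rightarrow> complex ^ 'n \<Rightarrow> bool" where
  "transverse_sphere_at w z \<longleftrightarrow>
     {a + b | a b. a \<in> oneform_kernel w \<and> b \<in> sphere_tangent z} = UNIV"

definition multi_indices :: "('a::euclidean_space \<Rightarrow> nat) set" where
  "multi_indices = {\<alpha>. \<forall>b. b \<notin> Basis \<longrightarrow> \<alpha> b = 0}"

definition real_analytic_on ::
  "'a::euclidean_space set \<Rightarrow> ('a \<Rightarrow> 'b::real_normed_vector) \<Rightarrow> bool" where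
  "real_analytic_on S F \<longleftrightarrow>
     (\<forall>x\<in>S. \<exists>r>0. \<exists>c :: ('a \<Rightarrow> nat) \<Rightarrow> 'b.
        (\<forall>y\<in>ball x r. (\<lambda>\<alpha>. (\<Prod>b\<in>Basis. ((y - x) \<bullet> b) ^ \<alpha> b) *\<^sub>R c \<alpha>) summable_on multi_indices) \<and>
        (\<forall>y\<in>S \<inter> ball x r.
           ((\<lambda>\<alpha>. (\<Prod>b\<in>Basis. ((y - x) \<bullet> b) ^ \<alpha> b) *\<^sub>R c \<alpha>) has_sum F y) multi_indices))"

text \<open>Omega_A = sum_{i,j} a_ij z_i dz_j has coefficient vector z v* A.\<close>

definition linear_form :: "complex ^ 'n ^ 'n \<Rightarrow> complex ^ 'n \<Rightarrow> complex ^ 'n" where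
  "linear_form A z = z v* A"

definition rescaled_form ::
  "(complex ^ 'n \<Rightarrow> complex ^ 'n) \<Rightarrow> complex ^ 'n ^ 'n \<Rightarrow> real \<Rightarrow> complex ^ 'n \<Rightarrow> complex ^ 'n" where
  "rescaled_form \<Omega> A t z = (if t = 0 then linear_form A z else inverse t *\<^sub>R \<Omega> (t *\<^sub>R z))"

end

(* Extend the family to complex s: (s, z) |-> s^-1 Omega(s z), with value Omega_A(z) at s = 0.
   Since Omega(0) = 0 and Omega_A is the linear part of Omega, this map is continuous, and it is
   holomorphic in each complex variable separately (in s the singularity at 0 is removable).
   By Osgood's lemma it is therefore a convergent power series in (s, z) around every point;
   restricting s to real values and expanding z_j = x_j + i y_j binomially yields a convergent
   real power series, i.e. real analyticity in (t, z).
   Transversality does not need the transversality of Ker(Omega): the relation Omega . R = 0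
   survives rescaling (at t = 0 by differentiating it at the origin), so the radial vector z lies
   in Ker(Omega^t) and is not tangent to the sphere. *)

theory Submission
  imports Defs "HOL-Complex_Analysis.Cauchy_Integral_Formula"
begin

unbundle no fps_syntax \<comment> \<open>\<open>$\<close> denotes vector components only, not also \<open>fps_nth\<close>\<close>

section \<open>Contour integrals depending on a parameter\<close>

lemma contour_integrable_continuous_C1_path:
  assumes "path \<gamma>" and "continuous_on {0..1} (\<lambda>t. vector_derivative \<gamma> (at t))"
    and "continuous_on (path_image \<gamma>) f"
  shows "f contour_integrable_on \<gamma>"
  unfolding contour_integrable_on
proof (intro integrable_continuous_real continuous_intros assms(2))
  show "continuous_on {0..1} (\<lambda>t. f (\<gamma> t))"
    using assms(3,1) unfolding path_def path_image_def by (rule continuous_on_compose2) auto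
qed

lemma continuous_on_vector_derivative_circlepath:
  "continuous_on {0..1} (\<lambda>t. vector_derivative (circlepath c \<rho>) (at t))"
  by (simp add: vector_derivative_circlepath) (intro continuous_intros)

lemma continuous_on_contour_integral_param:
  fixes F :: "'a::topological_space \<Rightarrow> complex \<Rightarrow> complex"
  assumes \<gamma>: "path \<gamma>" and \<gamma>': "continuous_on {0..1} (\<lambda>t. vector_derivative \<gamma> (at t))"
    and F: "continuous_on (X \<times> path_image \<gamma>) (\<lambda>(x, \<zeta>). F x \<zeta>)"
  shows "continuous_on X (\<lambda>x. contour_integral \<gamma> (F x))"
proof -
  have \<gamma>_cont: "continuous_on (X \<times> cbox 0 1) (\<lambda>p. \<gamma> (snd p))"
    using \<gamma> unfolding path_def by (rule continuous_on_compose2[OF _ continuous_on_snd[OF continuous_on_id]]) auto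
  have "continuous_on (X \<times> cbox 0 1) (\<lambda>p. (\<lambda>(x, \<zeta>). F x \<zeta>) (fst p, \<gamma> (snd p)))"
    by (rule continuous_on_compose2[OF F], intro continuous_on_Pair continuous_on_fst \<gamma>_cont)
       (auto simp: path_image_def)
  moreover have "continuous_on (X \<times> cbox 0 1) (\<lambda>p. vector_derivative \<gamma> (at (snd p)))"
    by (rule continuous_on_compose2[OF \<gamma>' continuous_on_snd[OF continuous_on_id]]) auto
  ultimately have "continuous_on (X \<times> cbox 0 1) (\<lambda>(x, t). F x (\<gamma> t) * vector_derivative \<gamma> (at t))"
    by (simp add: split_beta continuous_on_mult)
  then have "continuous_on X (\<lambda>x. integral (cbox 0 1) (\<lambda>t. F x (\<gamma> t) * vector_derivative \<gamma> (at t)))"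
    by (rule integral_continuous_on_param)
  then show ?thesis
    by (simp add: contour_integral_integral)
qed

lemma contour_integral_param_swap_linepath:
  fixes F :: "complex \<Rightarrow> complex \<Rightarrow> complex"
  assumes \<gamma>: "valid_path \<gamma>" and \<gamma>': "continuous_on {0..1} (\<lambda>t. vector_derivative \<gamma> (at t))"
    and F: "continuous_on (S \<times> path_image \<gamma>) (\<lambda>(\<eta>, \<zeta>). F \<eta> \<zeta>)"
    and ab: "closed_segment a b \<subseteq> S"
  shows "contour_integral (linepath a b) (\<lambda>\<eta>. contour_integral \<gamma> (F \<eta>)) =
      contour_integral \<gamma> (\<lambda>\<zeta>. contour_integral (linepath a b) (\<lambda>\<eta>. F \<eta> \<zeta>))"
    and "(\<lambda>\<zeta>. contour_integral (linepath a b) (\<lambda>\<eta>. F \<eta> \<zeta>)) contour_integrable_on \<gamma>"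
proof -
  have line': "continuous_on {0..1} (\<lambda>t. vector_derivative (linepath a b) (at t))"
    by simp
  show "contour_integral (linepath a b) (\<lambda>\<eta>. contour_integral \<gamma> (F \<eta>)) =
      contour_integral \<gamma> (\<lambda>\<zeta>. contour_integral (linepath a b) (\<lambda>\<eta>. F \<eta> \<zeta>))"
    by (rule contour_integral_swap) (use ab \<gamma> \<gamma>' line' in \<open>auto intro: continuous_on_subset[OF F]\<close>)
  have "continuous_on (path_image \<gamma>) (\<lambda>\<zeta>. contour_integral (linepath a b) (\<lambda>\<eta>. F \<eta> \<zeta>))"
    using ab by (intro continuous_on_contour_integral_param line'
        continuous_on_subset[OF continuous_on_swap_args[OF F]]) auto
  then show "(\<lambda>\<zeta>. contour_integral (linepath a b) (\<lambda>\<eta>. F \<eta> \<zeta>)) contour_integrable_on \<gamma>"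
    using \<gamma> \<gamma>' by (intro contour_integrable_continuous_C1_path valid_path_imp_path)
qed

text \<open>Morera's theorem, after exchanging the order of integration.\<close>

lemma holomorphic_on_contour_integral_param:
  fixes F :: "complex \<Rightarrow> complex \<Rightarrow> complex"
  assumes S: "open S" and \<gamma>: "valid_path \<gamma>"
    and \<gamma>': "continuous_on {0..1} (\<lambda>t. vector_derivative \<gamma> (at t))"
    and F: "continuous_on (S \<times> path_image \<gamma>) (\<lambda>(\<eta>, \<zeta>). F \<eta> \<zeta>)"
    and hol: "\<And>\<zeta>. \<zeta> \<in> path_image \<gamma> \<Longrightarrow> (\<lambda>\<eta>. F \<eta> \<zeta>) holomorphic_on S"
  shows "(\<lambda>\<eta>. contour_integral \<gamma> (F \<eta>)) holomorphic_on S"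
proof -
  define G where "G \<eta> = contour_integral \<gamma> (F \<eta>)" for \<eta>
  define L where "L a b \<zeta> = contour_integral (linepath a b) (\<lambda>\<eta>. F \<eta> \<zeta>)" for a b \<zeta>
  note swap = contour_integral_param_swap_linepath[OF \<gamma> \<gamma>' F, folded G_def L_def]
  have "continuous_on S G"
    unfolding G_def by (rule continuous_on_contour_integral_param[OF valid_path_imp_path[OF \<gamma>] \<gamma>' F])
  then have "G analytic_on S"
  proof (rule Morera_triangle[OF _ S], intro impI)
    fix a b c assume abc: "convex hull {a, b, c} \<subseteq> S"
    have segs: "closed_segment a b \<subseteq> S" "closed_segment b c \<subseteq> S" "closed_segment c a \<subseteq> S"
      by (rule order_trans[OF _ abc], rule segments_subset_convex_hull)+
    note integrable = swap(2)[OF segs(1)] swap(2)[OF segs(2)] swap(2)[OF segs(3)]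
    have "contour_integral (linepath a b) G + contour_integral (linepath b c) G
        + contour_integral (linepath c a) G = contour_integral \<gamma> (\<lambda>\<zeta>. L a b \<zeta> + L b c \<zeta> + L c a \<zeta>)"
      unfolding swap(1)[OF segs(1)] swap(1)[OF segs(2)] swap(1)[OF segs(3)]
      by (simp only: contour_integral_add[OF integrable(1) contour_integrable_add[OF integrable(2,3)]]
          contour_integral_add[OF integrable(2,3)] add.assoc)
    also have "\<dots> = 0"
    proof (rule contour_integral_eq_0)
      fix \<zeta> assume "\<zeta> \<in> path_image \<gamma>"
      then have "(\<lambda>\<eta>. F \<eta> \<zeta>) holomorphic_on convex hull {a, b, c}"
        using abc by (rule holomorphic_on_subset[OF hol])
      then show "L a b \<zeta> + L b c \<zeta> + L c a \<zeta> = 0"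
        unfolding L_def by (rule has_chain_integral_chain_integral3[OF Cauchy_theorem_triangle])
    qed
    finally show "contour_integral (linepath a b) G + contour_integral (linepath b c) G
        + contour_integral (linepath c a) G = 0" .
  qed
  then show ?thesis
    unfolding G_def by (rule analytic_imp_holomorphic)
qed

section \<open>Osgood's lemma\<close>

definition vec_upd :: "'a^'n \<Rightarrow> 'n \<Rightarrow> 'a \<Rightarrow> 'a^'n" where
  "vec_upd w j z = (\<chi> i. if i = j then z else w $ i)"

lemma vec_upd_nth [simp]: "vec_upd w j z $ i = (if i = j then z else w $ i)"
  by (simp add: vec_upd_def)

lemma vec_upd_vec_upd_same [simp]: "vec_upd (vec_upd w j a) j b = vec_upd w j b"
  by (simp add: vec_eq_iff)

lemma vec_upd_nth_same [simp]: "vec_upd w j (w $ j) = w"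
  by (simp add: vec_eq_iff)

lemma vec_upd_commute: "j \<noteq> k \<Longrightarrow> vec_upd (vec_upd w j a) k b = vec_upd (vec_upd w k b) j a"
  by (simp add: vec_eq_iff)

lemma continuous_on_vec_upd [continuous_intros]:
  assumes "continuous_on S f" "continuous_on S g"
  shows "continuous_on S (\<lambda>x. vec_upd (f x) j (g x))"
  unfolding vec_upd_def
proof (rule continuous_on_vec_lambda)
  fix i
  show "continuous_on S (\<lambda>x. if i = j then g x else f x $ i)"
    by (cases "i = j") (simp_all add: assms continuous_on_component)
qed

definition polydisc :: "complex^'n \<Rightarrow> real \<Rightarrow> (complex^'n) set" where
  "polydisc a \<rho> = {w. \<forall>j. w $ j \<in> ball (a $ j) \<rho>}"

definition cpolydisc :: "complex^'n \<Rightarrow> real \<Rightarrow> (complex^'n) set" where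
  "cpolydisc a \<rho> = {w. \<forall>j. w $ j \<in> cball (a $ j) \<rho>}"

lemma polydisc_subset_cpolydisc: "polydisc a \<rho> \<subseteq> cpolydisc a \<rho>"
  by (auto simp: polydisc_def cpolydisc_def intro: less_imp_le)

lemma center_in_cpolydisc: "0 \<le> \<rho> \<Longrightarrow> a \<in> cpolydisc a \<rho>"
  by (simp add: cpolydisc_def)

lemma vec_upd_in_cpolydisc:
  "w \<in> cpolydisc a \<rho> \<Longrightarrow> z \<in> cball (a $ j) \<rho> \<Longrightarrow> vec_upd w j z \<in> cpolydisc a \<rho>"
  by (simp add: cpolydisc_def)

lemma cpolydisc_subset_cball:
  assumes "0 \<le> \<rho>"
  shows "cpolydisc a \<rho> \<subseteq> cball (a :: complex^'n::finite) (real CARD('n) * \<rho>)"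
proof
  fix w assume "w \<in> cpolydisc a \<rho>"
  then have "norm ((a - w) $ j) \<le> \<rho>" for j
    by (simp add: cpolydisc_def dist_norm)
  then have "(\<Sum>j\<in>UNIV. norm ((a - w) $ j)) \<le> (\<Sum>j\<in>(UNIV :: 'n set). \<rho>)"
    by (intro sum_mono)
  moreover have "norm (a - w) \<le> (\<Sum>j\<in>UNIV. norm ((a - w) $ j))"
    unfolding norm_vec_def by (rule L2_set_le_sum) simp
  ultimately show "w \<in> cball a (real CARD('n) * \<rho>)"
    by (simp add: dist_norm)
qed

lemma compact_cpolydisc:
  assumes "0 \<le> \<rho>"
  shows "compact (cpolydisc (a :: complex^'n::finite) \<rho>)"
  unfolding compact_eq_bounded_closed
proof
  show "bounded (cpolydisc a \<rho>)"
    by (rule bounded_subset[OF bounded_cball cpolydisc_subset_cball[OF assms]])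
  show "closed (cpolydisc a \<rho>)"
    unfolding cpolydisc_def mem_cball
    by (intro closed_Collect_all closed_Collect_le continuous_intros)
qed

definition complex_monomial :: "complex^'n \<Rightarrow> ('n \<Rightarrow> nat) \<Rightarrow> complex" where
  "complex_monomial u \<beta> = (\<Prod>j\<in>UNIV. (u $ j) ^ \<beta> j)"

lemma complex_monomial_0 [simp]: "complex_monomial u (\<lambda>_. 0) = 1"
  by (simp add: complex_monomial_def)

lemma complex_monomial_fun_upd:
  fixes u :: "complex^'n::finite"
  assumes "\<beta> k = 0"
  shows "complex_monomial u (\<beta>(k := m)) = complex_monomial u \<beta> * (u $ k) ^ m"
proof -
  have "complex_monomial u (\<beta>(k := m)) = (u $ k) ^ m * (\<Prod>j\<in>UNIV - {k}. (u $ j) ^ \<beta> j)"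
    unfolding complex_monomial_def by (subst prod.remove[of UNIV k]) auto
  also have "complex_monomial u \<beta> = (u $ k) ^ \<beta> k * (\<Prod>j\<in>UNIV - {k}. (u $ j) ^ \<beta> j)"
    unfolding complex_monomial_def by (subst prod.remove[of UNIV k]) auto
  then have "(\<Prod>j\<in>UNIV - {k}. (u $ j) ^ \<beta> j) = complex_monomial u \<beta>"
    using assms by simp
  finally show ?thesis
    by (simp only: mult.commute)
qed

lemma has_sum_constant_power_series:
  "((\<lambda>\<beta>. (if \<beta> = (\<lambda>_. 0) then z else 0) * complex_monomial u \<beta>) has_sum z) UNIV"
proof -
  have "((\<lambda>\<beta>. (if \<beta> = (\<lambda>_. 0) then z else 0) * complex_monomial u \<beta>) has_sum z) {\<lambda>_. 0}"
    by (rule has_sum_finiteI) simp_all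
  then show ?thesis
    by (rule has_sum_cong_neutral[THEN iffD1, rotated 3]) auto
qed

lemma sum_fun_upd_zero:
  fixes \<beta> :: "'k::finite \<Rightarrow> nat"
  shows "sum \<beta> UNIV = \<beta> k + sum (\<beta>(k := 0)) UNIV"
proof -
  have "sum (\<beta>(k := 0)) UNIV = sum \<beta> (UNIV - {k})"
    by (subst sum.remove[of UNIV k]) (auto intro!: sum.cong)
  then show ?thesis
    by (simp add: sum.remove[of UNIV k, where g = \<beta>])
qed

lemma summable_on_prod_power:
  fixes q :: "'k::finite \<Rightarrow> real"
  assumes q: "\<And>j. 0 \<le> q j" "\<And>j. q j < 1"
  shows "(\<lambda>\<beta>::'k \<Rightarrow> nat. \<Prod>j\<in>UNIV. q j ^ \<beta> j) summable_on UNIV"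
proof (rule nonneg_bdd_above_summable_on)
  show "0 \<le> (\<Prod>j\<in>UNIV. q j ^ \<beta> j)" for \<beta> :: "'k \<Rightarrow> nat"
    using q by (simp add: prod_nonneg)
  show "bdd_above (sum (\<lambda>\<beta>. \<Prod>j\<in>UNIV. q j ^ \<beta> j) ` {F. F \<subseteq> UNIV \<and> finite F})"
  proof (rule bdd_aboveI2)
    fix F :: "('k \<Rightarrow> nat) set" assume "F \<in> {F. F \<subseteq> UNIV \<and> finite F}"
    then have F: "finite F" by simp
    define N where "N = Max ((\<lambda>(\<beta>, j). \<beta> j) ` (F \<times> UNIV))"
    have "F \<subseteq> PiE UNIV (\<lambda>_. {..N})"
      using F by (auto simp: N_def PiE_def extensional_def intro!: Max_ge)
    then have "(\<Sum>\<beta>\<in>F. \<Prod>j\<in>UNIV. q j ^ \<beta> j) \<le> (\<Sum>\<beta>\<in>PiE UNIV (\<lambda>_. {..N}). \<Prod>j\<in>UNIV. q j ^ \<beta> j)"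
      using q by (intro sum_mono2 finite_PiE) (auto intro!: prod_nonneg)
    also have "\<dots> = (\<Prod>j\<in>UNIV. \<Sum>n\<le>N. q j ^ n)"
      by (rule prod_sum_PiE[symmetric]) auto
    also have "\<dots> \<le> (\<Prod>j\<in>UNIV. 1 / (1 - q j))"
    proof (rule prod_mono, rule conjI)
      fix j :: 'k
      show "0 \<le> (\<Sum>n\<le>N. q j ^ n)"
        using q by (simp add: sum_nonneg)
      have "(\<Sum>n\<le>N. q j ^ n) \<le> (\<Sum>n. q j ^ n)"
        using q by (intro sum_le_suminf summable_geometric) auto
      then show "(\<Sum>n\<le>N. q j ^ n) \<le> 1 / (1 - q j)"
        using q by (simp add: suminf_geometric)
    qed
    finally show "(\<Sum>\<beta>\<in>F. \<Prod>j\<in>UNIV. q j ^ \<beta> j) \<le> (\<Prod>j\<in>UNIV. 1 / (1 - q j))" .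
  qed
qed

lemma abs_summable_on_cauchy_bounded:
  fixes c :: "('k::finite \<Rightarrow> nat) \<Rightarrow> complex" and u :: "complex^'k"
  assumes c: "\<And>\<beta>. norm (c \<beta>) \<le> M / \<rho> ^ sum \<beta> UNIV" and u: "\<And>j. norm (u $ j) < \<rho>"
  shows "(\<lambda>\<beta>. norm (c \<beta> * complex_monomial u \<beta>)) summable_on UNIV"
proof (rule Infinite_Sum.abs_summable_on_comparison_test')
  have "0 < \<rho>"
    using u[of undefined] by (meson norm_ge_zero order.strict_trans1)
  then show "(\<lambda>\<beta>. M * (\<Prod>j\<in>UNIV. (norm (u $ j) / \<rho>) ^ \<beta> j)) summable_on UNIV"
    using u by (intro summable_on_cmult_right summable_on_prod_power) auto
  fix \<beta> :: "'k \<Rightarrow> nat"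
  have "norm (c \<beta> * complex_monomial u \<beta>) = norm (c \<beta>) * (\<Prod>j\<in>UNIV. norm (u $ j) ^ \<beta> j)"
    by (simp add: complex_monomial_def norm_mult prod_norm[symmetric] norm_power)
  also have "\<dots> \<le> M / \<rho> ^ sum \<beta> UNIV * (\<Prod>j\<in>UNIV. norm (u $ j) ^ \<beta> j)"
    by (intro mult_right_mono c prod_nonneg) auto
  also have "\<dots> = M * (\<Prod>j\<in>UNIV. (norm (u $ j) / \<rho>) ^ \<beta> j)"
    by (simp add: power_sum power_divide prod_dividef)
  finally show "norm (c \<beta> * complex_monomial u \<beta>) \<le> M * (\<Prod>j\<in>UNIV. (norm (u $ j) / \<rho>) ^ \<beta> j)" .
qed

lemma norm_coeff_fun_upd_le:
  fixes d :: "nat \<Rightarrow> ('k::finite \<Rightarrow> nat) \<Rightarrow> complex"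
  assumes "\<And>m \<beta>. norm (d m \<beta>) \<le> M / \<rho> ^ m / \<rho> ^ sum \<beta> UNIV"
  shows "norm (d (\<beta> k) (\<beta>(k := 0))) \<le> M / \<rho> ^ sum \<beta> UNIV"
  using assms[of "\<beta> k" "\<beta>(k := 0)"] by (simp add: sum_fun_upd_zero[of \<beta> k] power_add)

text \<open>Reassembles a power series in the \<open>k\<close>-th variable whose coefficients are power series in
  the other variables.\<close>

lemma has_sum_fun_upd_split:
  fixes d :: "nat \<Rightarrow> ('k::finite \<Rightarrow> nat) \<Rightarrow> complex" and u :: "complex^'k"
  assumes summable: "(\<lambda>\<beta>. d (\<beta> k) (\<beta>(k := 0)) * complex_monomial u \<beta>) summable_on UNIV"
    and d0: "\<And>m \<beta>. \<beta> k \<noteq> 0 \<Longrightarrow> d m \<beta> = 0"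
    and inner: "\<And>m. ((\<lambda>\<beta>. d m \<beta> * complex_monomial u \<beta>) has_sum g m) UNIV"
    and outer: "(\<lambda>m. g m * (u $ k) ^ m) sums s"
  shows "((\<lambda>\<beta>. d (\<beta> k) (\<beta>(k := 0)) * complex_monomial u \<beta>) has_sum s) UNIV"
proof -
  define T where "T \<beta> = d (\<beta> k) (\<beta>(k := 0)) * complex_monomial u \<beta>" for \<beta>
  obtain S where S: "(T has_sum S) UNIV"
    using summable unfolding T_def summable_on_def by blast
  have "(T has_sum S) UNIV \<longleftrightarrow> ((\<lambda>p. T ((snd p)(k := fst p))) has_sum S) (UNIV \<times> {\<gamma>. \<gamma> k = 0})"
    by (rule has_sum_reindex_bij_witness[where j="\<lambda>\<beta>. (\<beta> k, \<beta>(k := 0))" and i="\<lambda>p. (snd p)(k := fst p)"])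
       auto
  with S have S': "((\<lambda>p. T ((snd p)(k := fst p))) has_sum S) (UNIV \<times> {\<gamma>. \<gamma> k = 0})"
    by simp
  have "((\<lambda>\<gamma>. T (\<gamma>(k := m))) has_sum g m * (u $ k) ^ m) {\<gamma>. \<gamma> k = 0}" for m
  proof -
    have "((\<lambda>\<gamma>. d m \<gamma> * complex_monomial u \<gamma>) has_sum g m) {\<gamma>. \<gamma> k = 0}"
      using inner[of m] by (subst has_sum_cong_neutral[where T = UNIV]) (auto simp: d0)
    then have "((\<lambda>\<gamma>. d m \<gamma> * complex_monomial u \<gamma> * (u $ k) ^ m) has_sum g m * (u $ k) ^ m) {\<gamma>. \<gamma> k = 0}"
      by (rule has_sum_cmult_left)
    then show ?thesis
      by (rule has_sum_cong[THEN iffD1, rotated])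
         (simp add: T_def complex_monomial_fun_upd mult.assoc fun_upd_idem)
  qed
  then have "((\<lambda>m. g m * (u $ k) ^ m) has_sum S) UNIV"
    using has_sum_SigmaD[OF S'] by simp
  then have "S = s"
    using outer has_sum_imp_sums sums_unique2 by blast
  then show ?thesis
    using S unfolding T_def by simp
qed

locale separately_holomorphic_polydisc =
  fixes f :: "complex^'k::finite \<Rightarrow> complex" and a :: "complex^'k" and \<rho> M :: real
  assumes radius_pos: "0 < \<rho>"
    and continuous: "continuous_on (cpolydisc a \<rho>) f"
    and holomorphic: "\<And>w j. w \<in> cpolydisc a \<rho> \<Longrightarrow> (\<lambda>\<zeta>. f (vec_upd w j \<zeta>)) holomorphic_on ball (a $ j) \<rho>"
    and bounded: "\<And>w. w \<in> cpolydisc a \<rho> \<Longrightarrow> norm (f w) \<le> M"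

definition partial_taylor_coeff ::
  "(complex^'k \<Rightarrow> complex) \<Rightarrow> complex^'k \<Rightarrow> 'k \<Rightarrow> nat \<Rightarrow> complex^'k \<Rightarrow> complex" where
  "partial_taylor_coeff f a k m w = (deriv ^^ m) (\<lambda>\<zeta>. f (vec_upd w k \<zeta>)) (a $ k) / fact m"

context separately_holomorphic_polydisc
begin

lemma bound_nonneg: "0 \<le> M"
  using bounded[OF center_in_cpolydisc] radius_pos by (meson less_imp_le norm_ge_zero order_trans)

lemma continuous_on_slice:
  "w \<in> cpolydisc a \<rho> \<Longrightarrow> continuous_on (cball (a $ k) \<rho>) (\<lambda>\<zeta>. f (vec_upd w k \<zeta>))"
  by (rule continuous_on_compose2[OF continuous]) (auto intro!: continuous_intros vec_upd_in_cpolydisc)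

lemma continuous_on_cauchy_integrand:
  "continuous_on (cpolydisc a \<rho> \<times> sphere (a $ k) \<rho>)
     (\<lambda>(w, u). f (vec_upd w k u) / (u - a $ k) ^ Suc m)"
proof -
  have "continuous_on (cpolydisc a \<rho> \<times> sphere (a $ k) \<rho>) (\<lambda>p. f (vec_upd (fst p) k (snd p)))"
    by (rule continuous_on_compose2[OF continuous])
       (auto intro!: continuous_intros vec_upd_in_cpolydisc simp: dist_norm norm_minus_commute)
  then have "continuous_on (cpolydisc a \<rho> \<times> sphere (a $ k) \<rho>)
      (\<lambda>p. f (vec_upd (fst p) k (snd p)) / (snd p - a $ k) ^ Suc m)"
    using radius_pos by (intro continuous_intros) (auto simp: dist_norm)
  then show ?thesis
    by (simp add: split_beta)
qed

lemma partial_taylor_coeff_eq_contour_integral: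
  assumes w: "w \<in> cpolydisc a \<rho>"
  shows "partial_taylor_coeff f a k m w =
    contour_integral (circlepath (a $ k) \<rho>) (\<lambda>u. f (vec_upd w k u) / (u - a $ k) ^ Suc m) / (2 * pi * \<i>)"
proof -
  have "((\<lambda>u. f (vec_upd w k u) / (u - a $ k) ^ Suc m) has_contour_integral
      (2 * pi * \<i>) / fact m * (deriv ^^ m) (\<lambda>\<zeta>. f (vec_upd w k \<zeta>)) (a $ k)) (circlepath (a $ k) \<rho>)"
    using radius_pos
    by (intro Cauchy_has_contour_integral_higher_derivative_circlepath continuous_on_slice w holomorphic) auto
  then show ?thesis
    by (simp add: partial_taylor_coeff_def contour_integral_unique field_simps)
qed

lemma continuous_on_partial_taylor_coeff:
  "continuous_on (cpolydisc a \<rho>) (partial_taylor_coeff f a k m)"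
proof -
  have "continuous_on (cpolydisc a \<rho>) (\<lambda>w. contour_integral (circlepath (a $ k) \<rho>)
      (\<lambda>u. f (vec_upd w k u) / (u - a $ k) ^ Suc m) / (2 * pi * \<i>))"
    using continuous_on_cauchy_integrand radius_pos
    by (intro continuous_intros continuous_on_contour_integral_param
        continuous_on_vector_derivative_circlepath) (auto simp: path_image_circlepath_nonneg)
  then show ?thesis
    by (rule continuous_on_cong[THEN iffD1, rotated 2]) (simp_all add: partial_taylor_coeff_eq_contour_integral)
qed

lemma holomorphic_partial_taylor_coeff:
  assumes w: "w \<in> cpolydisc a \<rho>"
  shows "(\<lambda>\<eta>. partial_taylor_coeff f a k m (vec_upd w j \<eta>)) holomorphic_on ball (a $ j) \<rho>"
proof (cases "j = k")
  case True
  then show ?thesis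
    by (simp add: partial_taylor_coeff_def)
next
  case False
  have upd_in: "vec_upd w j \<eta> \<in> cpolydisc a \<rho>" if "\<eta> \<in> ball (a $ j) \<rho>" for \<eta>
    using that w by (intro vec_upd_in_cpolydisc) auto
  define F where "F \<eta> u = f (vec_upd (vec_upd w j \<eta>) k u) / (u - a $ k) ^ Suc m" for \<eta> u
  have "(\<lambda>\<eta>. contour_integral (circlepath (a $ k) \<rho>) (F \<eta>)) holomorphic_on ball (a $ j) \<rho>"
  proof (rule holomorphic_on_contour_integral_param[OF open_ball valid_path_circlepath
        continuous_on_vector_derivative_circlepath])
    have "continuous_on (ball (a $ j) \<rho> \<times> sphere (a $ k) \<rho>)
        ((\<lambda>(w, u). f (vec_upd w k u) / (u - a $ k) ^ Suc m) \<circ> (\<lambda>p. (vec_upd w j (fst p), snd p)))"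
      by (rule continuous_on_compose, intro continuous_intros,
          rule continuous_on_subset[OF continuous_on_cauchy_integrand]) (auto intro: upd_in)
    then show "continuous_on (ball (a $ j) \<rho> \<times> path_image (circlepath (a $ k) \<rho>)) (\<lambda>(\<eta>, \<zeta>). F \<eta> \<zeta>)"
      using radius_pos by (simp add: F_def o_def split_beta path_image_circlepath_nonneg)
    fix \<zeta> assume "\<zeta> \<in> path_image (circlepath (a $ k) \<rho>)"
    then have \<zeta>: "\<zeta> \<in> sphere (a $ k) \<rho>"
      using radius_pos by (simp add: path_image_circlepath_nonneg)
    then have "vec_upd w k \<zeta> \<in> cpolydisc a \<rho>"
      using w by (intro vec_upd_in_cpolydisc) auto
    then have "(\<lambda>\<eta>. f (vec_upd (vec_upd w k \<zeta>) j \<eta>) / (\<zeta> - a $ k) ^ Suc m) holomorphic_on ball (a $ j) \<rho>"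
      using \<zeta> radius_pos by (intro holomorphic_intros holomorphic) (auto simp: dist_norm)
    then show "(\<lambda>\<eta>. F \<eta> \<zeta>) holomorphic_on ball (a $ j) \<rho>"
      using False by (simp add: F_def vec_upd_commute)
  qed
  then have "(\<lambda>\<eta>. contour_integral (circlepath (a $ k) \<rho>) (F \<eta>) / (2 * pi * \<i>)) holomorphic_on ball (a $ j) \<rho>"
    by (intro holomorphic_intros) auto
  then show ?thesis
    by (rule holomorphic_transform) (simp add: partial_taylor_coeff_eq_contour_integral upd_in F_def[abs_def])
qed

lemma norm_partial_taylor_coeff_le:
  assumes w: "w \<in> cpolydisc a \<rho>"
  shows "norm (partial_taylor_coeff f a k m w) \<le> M / \<rho> ^ m"
proof -
  have "norm ((deriv ^^ m) (\<lambda>\<zeta>. f (vec_upd w k \<zeta>)) (a $ k)) \<le> fact m * M / \<rho> ^ m"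
  proof (rule Cauchy_inequality[OF holomorphic[OF w] continuous_on_slice[OF w] radius_pos])
    fix x assume "norm (a $ k - x) = \<rho>"
    then have "vec_upd w k x \<in> cpolydisc a \<rho>"
      using w by (intro vec_upd_in_cpolydisc) (simp_all add: dist_norm)
    then show "norm (f (vec_upd w k x)) \<le> M"
      by (rule bounded)
  qed
  then show ?thesis
    by (simp add: partial_taylor_coeff_def norm_divide field_simps)
qed

lemma partial_taylor_coeff_sums:
  assumes w: "w \<in> polydisc a \<rho>"
  shows "(\<lambda>m. partial_taylor_coeff f a k m w * (w $ k - a $ k) ^ m) sums f w"
proof -
  have "w \<in> cpolydisc a \<rho>"
    using w polydisc_subset_cpolydisc by blast
  moreover have "w $ k \<in> ball (a $ k) \<rho>"
    using w by (simp add: polydisc_def)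
  ultimately have "(\<lambda>m. (deriv ^^ m) (\<lambda>\<zeta>. f (vec_upd w k \<zeta>)) (a $ k) / fact m * (w $ k - a $ k) ^ m)
      sums f (vec_upd w k (w $ k))"
    by (rule holomorphic_power_series[OF holomorphic])
  then show ?thesis
    by (simp add: partial_taylor_coeff_def)
qed

lemma has_sum_partial_taylor_coeff_expansion:
  assumes d0: "\<And>m \<beta>. \<beta> k \<noteq> 0 \<Longrightarrow> d m \<beta> = 0"
    and d_bound: "\<And>m \<beta>. norm (d m \<beta>) \<le> M / \<rho> ^ m / \<rho> ^ sum \<beta> UNIV"
    and d_sum: "\<And>m. ((\<lambda>\<beta>. d m \<beta> * complex_monomial (w - a) \<beta>) has_sum partial_taylor_coeff f a k m w) UNIV"
    and w: "w \<in> polydisc a \<rho>"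
  shows "((\<lambda>\<beta>. d (\<beta> k) (\<beta>(k := 0)) * complex_monomial (w - a) \<beta>) has_sum f w) UNIV"
proof (rule has_sum_fun_upd_split[OF _ d0 d_sum])
  have "norm ((w - a) $ j) < \<rho>" for j
    using w by (simp add: polydisc_def dist_norm norm_minus_commute)
  with norm_coeff_fun_upd_le[OF d_bound]
  show "(\<lambda>\<beta>. d (\<beta> k) (\<beta>(k := 0)) * complex_monomial (w - a) \<beta>) summable_on UNIV"
    by (intro abs_summable_summable[OF abs_summable_on_cauchy_bounded])
  show "(\<lambda>m. partial_taylor_coeff f a k m w * (w - a) $ k ^ m) sums f w"
    using partial_taylor_coeff_sums[OF w] by simp
qed

lemma expansion_of_constant:
  assumes const: "\<And>w. f w = f a"
  shows "\<exists>c. (\<forall>\<beta>. (\<exists>j. \<beta> j \<noteq> 0) \<longrightarrow> c \<beta> = 0) \<and>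
             (\<forall>\<beta>. norm (c \<beta>) \<le> M / \<rho> ^ sum \<beta> UNIV) \<and>
             (\<forall>w\<in>polydisc a \<rho>. ((\<lambda>\<beta>. c \<beta> * complex_monomial (w - a) \<beta>) has_sum f w) UNIV)"
proof (intro exI[of _ "\<lambda>\<beta>. if \<beta> = (\<lambda>_. 0) then f a else 0"] conjI allI ballI impI)
  show "(if \<beta> = (\<lambda>_. 0) then f a else 0) = 0" if "\<exists>j. \<beta> j \<noteq> 0" for \<beta>
    using that by auto
  have "norm (f a) \<le> M"
    using radius_pos by (intro bounded center_in_cpolydisc) simp
  then show "norm (if \<beta> = (\<lambda>_. 0) then f a else 0) \<le> M / \<rho> ^ sum \<beta> UNIV" for \<beta>
    using bound_nonneg radius_pos by simp
  show "((\<lambda>\<beta>. (if \<beta> = (\<lambda>_. 0) then f a else 0) * complex_monomial (w - a) \<beta>) has_sum f w) UNIV" for w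
    unfolding const[of w] by (rule has_sum_constant_power_series)
qed

lemma separately_holomorphic_polydisc_partial_taylor_coeff:
  "separately_holomorphic_polydisc (partial_taylor_coeff f a k m) a \<rho> (M / \<rho> ^ m)"
  by unfold_locales (simp_all add: radius_pos continuous_on_partial_taylor_coeff
      holomorphic_partial_taylor_coeff norm_partial_taylor_coeff_le)

end

text \<open>Induction on the set \<open>I\<close> of variables on which \<open>f\<close> actually depends: expanding in the
  variable \<open>k\<close> leaves Taylor coefficients that depend only on \<open>I\<close>.\<close>

lemma osgood_expansion_depends_on:
  assumes "finite I" and "separately_holomorphic_polydisc f a \<rho> M"
    and "\<And>w w'. (\<forall>j\<in>I. w $ j = w' $ j) \<Longrightarrow> f w = f w'"
  shows "\<exists>c. (\<forall>\<beta>. (\<exists>j. j \<notin> I \<and> \<beta> j \<noteq> 0) \<longrightarrow> c \<beta> = 0) \<and>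
             (\<forall>\<beta>. norm (c \<beta>) \<le> M / \<rho> ^ sum \<beta> UNIV) \<and>
             (\<forall>w\<in>polydisc a \<rho>. ((\<lambda>\<beta>. c \<beta> * complex_monomial (w - a) \<beta>) has_sum f w) UNIV)"
  using assms
proof (induction I arbitrary: f M rule: finite_induct)
  case empty
  interpret separately_holomorphic_polydisc f a \<rho> M
    by (rule empty.prems(1))
  have "f w = f a" for w
    by (rule empty.prems(2)) simp
  then show ?case
    using expansion_of_constant by simp
next
  case (insert k I)
  interpret separately_holomorphic_polydisc f a \<rho> M
    by (rule insert.prems(1))
  define g where "g m = partial_taylor_coeff f a k m" for m
  have g_depends: "g m w = g m w'" if "\<forall>j\<in>I. w $ j = w' $ j" for m w w'
  proof -
    have "f (vec_upd w k \<zeta>) = f (vec_upd w' k \<zeta>)" for \<zeta>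
      using that by (intro insert.prems(2)) simp
    then show ?thesis
      by (simp add: g_def partial_taylor_coeff_def)
  qed
  have "\<forall>m. \<exists>d. (\<forall>\<beta>. (\<exists>j. j \<notin> I \<and> \<beta> j \<noteq> 0) \<longrightarrow> d \<beta> = 0) \<and>
            (\<forall>\<beta>. norm (d \<beta>) \<le> M / \<rho> ^ m / \<rho> ^ sum \<beta> UNIV) \<and>
            (\<forall>w\<in>polydisc a \<rho>. ((\<lambda>\<beta>. d \<beta> * complex_monomial (w - a) \<beta>) has_sum g m w) UNIV)"
    unfolding g_def
    by (intro allI insert.IH[OF separately_holomorphic_polydisc_partial_taylor_coeff g_depends[unfolded g_def]])
  then obtain d where d: "\<forall>m. (\<forall>\<beta>. (\<exists>j. j \<notin> I \<and> \<beta> j \<noteq> 0) \<longrightarrow> d m \<beta> = 0) \<and>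
            (\<forall>\<beta>. norm (d m \<beta>) \<le> M / \<rho> ^ m / \<rho> ^ sum \<beta> UNIV) \<and>
            (\<forall>w\<in>polydisc a \<rho>. ((\<lambda>\<beta>. d m \<beta> * complex_monomial (w - a) \<beta>) has_sum g m w) UNIV)"
    by (rule choice[THEN exE])
  have d0: "d m \<beta> = 0" if "\<exists>j. j \<notin> I \<and> \<beta> j \<noteq> 0" for m \<beta>
    using conjunct1[OF spec[OF d, of m]] that by blast
  have d_bound: "norm (d m \<beta>) \<le> M / \<rho> ^ m / \<rho> ^ sum \<beta> UNIV" for m \<beta>
    using d by simp
  have d_sum: "((\<lambda>\<beta>. d m \<beta> * complex_monomial (w - a) \<beta>) has_sum g m w) UNIV"
    if "w \<in> polydisc a \<rho>" for m w
    using d that by simp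
  show ?case
  proof (intro exI[of _ "\<lambda>\<beta>. d (\<beta> k) (\<beta>(k := 0))"] conjI allI ballI impI)
    show "d (\<beta> k) (\<beta>(k := 0)) = 0" if "\<exists>j. j \<notin> insert k I \<and> \<beta> j \<noteq> 0" for \<beta>
      using that by (intro d0) auto
    show "norm (d (\<beta> k) (\<beta>(k := 0))) \<le> M / \<rho> ^ sum \<beta> UNIV" for \<beta>
      by (rule norm_coeff_fun_upd_le[OF d_bound])
    show "((\<lambda>\<beta>. d (\<beta> k) (\<beta>(k := 0)) * complex_monomial (w - a) \<beta>) has_sum f w) UNIV"
      if "w \<in> polydisc a \<rho>" for w
      using insert.hyps(2) d_sum[OF that, unfolded g_def] that
      by (intro has_sum_partial_taylor_coeff_expansion d0 d_bound) auto
  qed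
qed

theorem osgood_expansion:
  assumes "separately_holomorphic_polydisc f a \<rho> M"
  shows "\<exists>c. (\<forall>\<beta>. norm (c \<beta>) \<le> M / \<rho> ^ sum \<beta> UNIV) \<and>
             (\<forall>w\<in>polydisc a \<rho>. ((\<lambda>\<beta>. c \<beta> * complex_monomial (w - a) \<beta>) has_sum f w) UNIV)"
proof -
  have "\<exists>c. (\<forall>\<beta>. (\<exists>j. j \<notin> UNIV \<and> \<beta> j \<noteq> 0) \<longrightarrow> c \<beta> = 0) \<and>
             (\<forall>\<beta>. norm (c \<beta>) \<le> M / \<rho> ^ sum \<beta> UNIV) \<and>
             (\<forall>w\<in>polydisc a \<rho>. ((\<lambda>\<beta>. c \<beta> * complex_monomial (w - a) \<beta>) has_sum f w) UNIV)"
  proof (rule osgood_expansion_depends_on[OF finite_class.finite_UNIV assms])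
    fix w w' :: "complex^'a" assume "\<forall>j\<in>UNIV. w $ j = w' $ j"
    then have "w = w'"
      by (simp add: vec_eq_iff)
    then show "f w = f w'"
      by (rule arg_cong)
  qed
  then show ?thesis
    by (elim exE conjE, intro exI conjI) assumption+
qed

section \<open>Complex power series restricted to real directions\<close>

definition basis_time :: "real \<times> (complex^'n)" where
  "basis_time = (1, 0)"

definition basis_re :: "'n \<Rightarrow> real \<times> (complex^'n)" where
  "basis_re j = (0, axis j 1)"

definition basis_im :: "'n \<Rightarrow> real \<times> (complex^'n)" where
  "basis_im j = (0, axis j \<i>)"

lemma Basis_real_prod_vec:
  "(Basis :: (real \<times> (complex^'n::finite)) set) = insert basis_time (range basis_re \<union> range basis_im)"
  by (auto simp: Basis_prod_def Basis_vec_def Basis_complex_def basis_time_def basis_re_def basis_im_def)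

lemma basis_in_Basis [simp]:
  "(basis_time :: real \<times> (complex^'n::finite)) \<in> Basis"
  "(basis_re j :: real \<times> (complex^'n::finite)) \<in> Basis"
  "(basis_im j :: real \<times> (complex^'n::finite)) \<in> Basis"
  by (simp_all add: Basis_real_prod_vec)

lemma basis_distinct [simp]:
  "basis_time \<noteq> basis_re j" "basis_re j \<noteq> basis_time"
  "basis_time \<noteq> basis_im j" "basis_im j \<noteq> basis_time"
  "basis_re j \<noteq> basis_im j'" "basis_im j' \<noteq> basis_re j"
  "basis_re j = basis_re j' \<longleftrightarrow> j = j'" "basis_im j = basis_im j' \<longleftrightarrow> j = j'"
  by (auto simp: basis_time_def basis_re_def basis_im_def axis_eq_axis complex_eq_iff)

lemma inner_basis [simp]:
  fixes d :: "real \<times> (complex^'n::finite)"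
  shows "d \<bullet> basis_time = fst d" "d \<bullet> basis_re j = Re (snd d $ j)" "d \<bullet> basis_im j = Im (snd d $ j)"
  by (auto simp: basis_time_def basis_re_def basis_im_def inner_prod_def inner_axis)

lemma prod_Basis_real_prod_vec:
  fixes g :: "real \<times> (complex^'n::finite) \<Rightarrow> 'a::comm_monoid_mult"
  shows "(\<Prod>b\<in>Basis. g b) = g basis_time * ((\<Prod>j\<in>UNIV. g (basis_re j)) * (\<Prod>j\<in>UNIV. g (basis_im j)))"
proof -
  have "(\<Prod>b\<in>Basis. g b) = g basis_time * (\<Prod>b\<in>range basis_re \<union> range basis_im. g b)"
    unfolding Basis_real_prod_vec by (subst prod.insert) auto
  also have "(\<Prod>b\<in>range basis_re \<union> range basis_im. g b) = (\<Prod>b\<in>range basis_re. g b) * (\<Prod>b\<in>range basis_im. g b)"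
    by (rule prod.union_disjoint) auto
  also have "\<dots> = (\<Prod>j\<in>UNIV. g (basis_re j)) * (\<Prod>j\<in>UNIV. g (basis_im j))"
    by (simp add: prod.reindex inj_on_def)
  finally show ?thesis .
qed

lemma prod_UNIV_option:
  fixes g :: "'n::finite option \<Rightarrow> 'a::comm_monoid_mult"
  shows "(\<Prod>ox\<in>UNIV. g ox) = g None * (\<Prod>j\<in>UNIV. g (Some j))"
  by (simp add: UNIV_option_conv prod.reindex)

definition complexify :: "real \<times> (complex^'n) \<Rightarrow> complex^('n option)" where
  "complexify y = (\<chi> ox. case ox of None \<Rightarrow> of_real (fst y) | Some j \<Rightarrow> snd y $ j)"

lemma complexify_nth [simp]:
  "complexify y $ None = of_real (fst y)" "complexify y $ Some j = snd y $ j"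
  by (simp_all add: complexify_def)

lemma complexify_diff: "complexify y - complexify x = complexify (y - x)"
  by (simp add: vec_eq_iff complexify_def split: option.split)

definition real_monomial :: "'a::euclidean_space \<Rightarrow> ('a \<Rightarrow> nat) \<Rightarrow> real" where
  "real_monomial d \<alpha> = (\<Prod>b\<in>Basis. (d \<bullet> b) ^ \<alpha> b)"

text \<open>Expanding \<open>(x_j + i y_j)^(\<beta> (Some j))\<close> binomially turns the complex monomial with exponent
  \<open>\<beta>\<close> (where \<open>\<beta> None\<close> is the exponent of \<open>t\<close>) into a sum of real monomials, indexed by the
  exponents \<open>p j \<le> \<beta> (Some j)\<close> of the \<open>x_j\<close>.\<close>

definition binomial_choices :: "('n option \<Rightarrow> nat) \<Rightarrow> ('n \<Rightarrow> nat) set" where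
  "binomial_choices \<beta> = {p. \<forall>j. p j \<le> \<beta> (Some j)}"

definition binomial_weight :: "('n::finite option \<Rightarrow> nat) \<Rightarrow> ('n \<Rightarrow> nat) \<Rightarrow> complex" where
  "binomial_weight \<beta> p = (\<Prod>j\<in>UNIV. of_nat (\<beta> (Some j) choose p j) * \<i> ^ (\<beta> (Some j) - p j))"

definition real_multi_index :: "('n option \<Rightarrow> nat) \<Rightarrow> ('n \<Rightarrow> nat) \<Rightarrow> real \<times> (complex^'n) \<Rightarrow> nat" where
  "real_multi_index \<beta> p b =
     (if b = basis_time then \<beta> None
      else if \<exists>j. b = basis_re j then p (THE j. b = basis_re j)
      else if \<exists>j. b = basis_im j then \<beta> (Some (THE j. b = basis_im j)) - p (THE j. b = basis_im j)
      else 0)"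

definition binomial_index :: "(real \<times> (complex^'n) \<Rightarrow> nat) \<Rightarrow> ('n option \<Rightarrow> nat) \<times> ('n \<Rightarrow> nat)" where
  "binomial_index \<alpha> =
     (\<lambda>ox. case ox of None \<Rightarrow> \<alpha> basis_time | Some j \<Rightarrow> \<alpha> (basis_re j) + \<alpha> (basis_im j),
      \<lambda>j. \<alpha> (basis_re j))"

lemma real_multi_index_simps [simp]:
  "real_multi_index \<beta> p basis_time = \<beta> None"
  "real_multi_index \<beta> p (basis_re j) = p j"
  "real_multi_index \<beta> p (basis_im j) = \<beta> (Some j) - p j"
  by (auto simp: real_multi_index_def)

lemma binomial_choices_eq_PiE: "binomial_choices \<beta> = PiE UNIV (\<lambda>j. {..\<beta> (Some j)})"
  by (auto simp: binomial_choices_def PiE_def extensional_def)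

lemma finite_binomial_choices [simp]: "finite (binomial_choices (\<beta> :: 'n::finite option \<Rightarrow> nat))"
  by (simp add: binomial_choices_eq_PiE finite_PiE)

lemma real_multi_index_binomial_index:
  fixes \<alpha> :: "real \<times> (complex^'n::finite) \<Rightarrow> nat"
  assumes "\<alpha> \<in> multi_indices"
  shows "real_multi_index (fst (binomial_index \<alpha>)) (snd (binomial_index \<alpha>)) = \<alpha>"
proof
  fix b :: "real \<times> (complex^'n)"
  show "real_multi_index (fst (binomial_index \<alpha>)) (snd (binomial_index \<alpha>)) b = \<alpha> b"
  proof (cases "b \<in> Basis")
    case True
    then consider "b = basis_time" | j where "b = basis_re j" | j where "b = basis_im j"
      by (auto simp: Basis_real_prod_vec)
    then show ?thesis
      by cases (auto simp: binomial_index_def)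
  next
    case False
    then have "b \<noteq> basis_time" "\<And>j. b \<noteq> basis_re j" "\<And>j. b \<noteq> basis_im j"
      by auto
    moreover have "\<alpha> b = 0"
      using assms False by (simp add: multi_indices_def del: split_paired_All)
    ultimately show ?thesis
      by (simp add: real_multi_index_def)
  qed
qed

lemma binomial_index_real_multi_index:
  "p \<in> binomial_choices \<beta> \<Longrightarrow> binomial_index (real_multi_index \<beta> p) = (\<beta>, p)"
  by (auto simp: binomial_index_def binomial_choices_def fun_eq_iff split: option.split)

lemma bij_betw_binomial_index:
  "bij_betw binomial_index (multi_indices :: (real \<times> (complex^'n::finite) \<Rightarrow> nat) set)
     (SIGMA \<beta>:UNIV. binomial_choices \<beta>)"
proof (rule bij_betw_byWitness[where f' = "\<lambda>(\<beta>, p). real_multi_index \<beta> p"])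
  show "binomial_index ` multi_indices \<subseteq> (SIGMA \<beta>:UNIV. binomial_choices \<beta>)"
    by (auto simp: binomial_index_def binomial_choices_def)
  show "(\<lambda>(\<beta>, p). real_multi_index \<beta> p) ` (SIGMA \<beta>:UNIV. binomial_choices \<beta>) \<subseteq> multi_indices"
    by (auto simp: multi_indices_def real_multi_index_def)
qed (auto simp: real_multi_index_binomial_index binomial_index_real_multi_index split_beta)

lemma real_monomial_real_multi_index:
  fixes d :: "real \<times> (complex^'n::finite)"
  shows "real_monomial d (real_multi_index \<beta> p) = fst d ^ \<beta> None *
     (\<Prod>j\<in>UNIV. Re (snd d $ j) ^ p j * Im (snd d $ j) ^ (\<beta> (Some j) - p j))"
  unfolding real_monomial_def prod_Basis_real_prod_vec by (simp add: prod.distrib)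

lemma sum_binomial_choices:
  fixes x y :: "'n::finite \<Rightarrow> 'a::comm_semiring_1"
  shows "(\<Sum>p\<in>binomial_choices \<beta>. \<Prod>j\<in>UNIV. of_nat (\<beta> (Some j) choose p j) * x j ^ p j * y j ^ (\<beta> (Some j) - p j))
     = (\<Prod>j\<in>UNIV. (x j + y j) ^ \<beta> (Some j))"
proof -
  have "(\<Sum>p\<in>binomial_choices \<beta>. \<Prod>j\<in>UNIV. of_nat (\<beta> (Some j) choose p j) * x j ^ p j * y j ^ (\<beta> (Some j) - p j))
      = (\<Prod>j\<in>UNIV. \<Sum>k\<le>\<beta> (Some j). of_nat (\<beta> (Some j) choose k) * x j ^ k * y j ^ (\<beta> (Some j) - k))"
    by (simp add: binomial_choices_eq_PiE prod_sum_PiE)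
  also have "\<dots> = (\<Prod>j\<in>UNIV. (x j + y j) ^ \<beta> (Some j))"
    by (simp add: binomial_ring)
  finally show ?thesis .
qed

lemma complex_monomial_complexify:
  fixes d :: "real \<times> (complex^'n::finite)"
  shows "complex_monomial (complexify d) \<beta> =
    (\<Sum>p\<in>binomial_choices \<beta>. real_monomial d (real_multi_index \<beta> p) *\<^sub>R binomial_weight \<beta> p)"
proof -
  have "(\<Sum>p\<in>binomial_choices \<beta>. real_monomial d (real_multi_index \<beta> p) *\<^sub>R binomial_weight \<beta> p) =
      of_real (fst d) ^ \<beta> None * (\<Sum>p\<in>binomial_choices \<beta>. \<Prod>j\<in>UNIV. of_nat (\<beta> (Some j) choose p j) *
        of_real (Re (snd d $ j)) ^ p j * (\<i> * of_real (Im (snd d $ j))) ^ (\<beta> (Some j) - p j))"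
    by (simp add: real_monomial_real_multi_index binomial_weight_def scaleR_conv_of_real of_real_prod
        power_mult_distrib sum_distrib_left prod.distrib[symmetric] mult_ac)
  also have "\<dots> = of_real (fst d) ^ \<beta> None *
      (\<Prod>j\<in>UNIV. (of_real (Re (snd d $ j)) + \<i> * of_real (Im (snd d $ j))) ^ \<beta> (Some j))"
    by (subst sum_binomial_choices) (rule refl)
  also have "\<dots> = complex_monomial (complexify d) \<beta>"
    by (simp add: complex_monomial_def prod_UNIV_option flip: complex_eq)
  finally show ?thesis ..
qed

definition l1_coord :: "real \<times> (complex^'n) \<Rightarrow> 'n option \<Rightarrow> real" where
  "l1_coord d ox = (case ox of None \<Rightarrow> \<bar>fst d\<bar> | Some j \<Rightarrow> \<bar>Re (snd d $ j)\<bar> + \<bar>Im (snd d $ j)\<bar>)"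

lemma l1_coord_le: "l1_coord (d :: real \<times> (complex^'n::finite)) ox \<le> 2 * norm d"
proof -
  have "\<bar>d \<bullet> b\<bar> \<le> norm d" if "b \<in> Basis" for b
    using that by (rule Basis_le_norm)
  then have "\<bar>fst d\<bar> \<le> norm d" "\<bar>Re (snd d $ j)\<bar> \<le> norm d" "\<bar>Im (snd d $ j)\<bar> \<le> norm d" for j
    by (metis basis_in_Basis inner_basis)+
  then have "\<bar>Re (snd d $ j)\<bar> + \<bar>Im (snd d $ j)\<bar> \<le> 2 * norm d" for j
    by (metis add_mono mult_2)
  then show ?thesis
    using \<open>\<bar>fst d\<bar> \<le> norm d\<close> by (cases ox) (auto simp: l1_coord_def)
qed

lemma sum_norm_binomial_expansion:
  fixes d :: "real \<times> (complex^'n::finite)"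
  shows "(\<Sum>p\<in>binomial_choices \<beta>. norm (real_monomial d (real_multi_index \<beta> p) *\<^sub>R binomial_weight \<beta> p)) =
    (\<Prod>ox\<in>UNIV. l1_coord d ox ^ \<beta> ox)"
proof -
  have "(\<Sum>p\<in>binomial_choices \<beta>. norm (real_monomial d (real_multi_index \<beta> p) *\<^sub>R binomial_weight \<beta> p)) =
      \<bar>fst d\<bar> ^ \<beta> None * (\<Sum>p\<in>binomial_choices \<beta>. \<Prod>j\<in>UNIV. of_nat (\<beta> (Some j) choose p j) *
        \<bar>Re (snd d $ j)\<bar> ^ p j * \<bar>Im (snd d $ j)\<bar> ^ (\<beta> (Some j) - p j))"
    by (simp add: real_monomial_real_multi_index binomial_weight_def norm_mult prod_norm[symmetric]
        norm_power abs_mult power_abs abs_prod prod.distrib sum_distrib_left mult_ac)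
  also have "\<dots> = (\<Prod>ox\<in>UNIV. l1_coord d ox ^ \<beta> ox)"
    by (subst sum_binomial_choices) (simp add: prod_UNIV_option l1_coord_def)
  finally show ?thesis .
qed

lemma norm_complexify_le_l1_coord: "norm (complexify d $ ox) \<le> l1_coord d ox"
  by (cases ox) (simp_all add: l1_coord_def cmod_le)

definition real_coeff ::
  "(('n option \<Rightarrow> nat) \<Rightarrow> complex) \<Rightarrow> (real \<times> (complex^'n) \<Rightarrow> nat) \<Rightarrow> complex" where
  "real_coeff c \<alpha> = (case binomial_index \<alpha> of (\<beta>, p) \<Rightarrow> c \<beta> * binomial_weight \<beta> p)"

definition binomial_term ::
  "(('n::finite option \<Rightarrow> nat) \<Rightarrow> complex) \<Rightarrow> real \<times> (complex^'n) \<Rightarrow> ('n option \<Rightarrow> nat) \<times> ('n \<Rightarrow> nat) \<Rightarrow> complex"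
  where "binomial_term c d q =
    real_monomial d (real_multi_index (fst q) (snd q)) *\<^sub>R (c (fst q) * binomial_weight (fst q) (snd q))"

lemma has_sum_binomial_term:
  "((\<lambda>p. binomial_term c d (\<beta>, p)) has_sum c \<beta> * complex_monomial (complexify d) \<beta>) (binomial_choices \<beta>)"
  by (rule has_sum_finiteI)
     (simp_all add: binomial_term_def complex_monomial_complexify sum_distrib_left mult.left_commute[of "c \<beta>"])

lemma binomial_term_binomial_index:
  "\<alpha> \<in> multi_indices \<Longrightarrow> binomial_term c d (binomial_index \<alpha>) = real_monomial d \<alpha> *\<^sub>R real_coeff c \<alpha>"
  using real_multi_index_binomial_index[of \<alpha>] by (simp add: binomial_term_def real_coeff_def split_beta)

lemma abs_summable_binomial_term:
  fixes c :: "('n::finite option \<Rightarrow> nat) \<Rightarrow> complex"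
  assumes \<rho>: "0 < \<rho>" and c_bound: "\<And>\<beta>. norm (c \<beta>) \<le> K / \<rho> ^ sum \<beta> UNIV"
    and d: "\<And>ox. l1_coord d ox < \<rho>"
  shows "(\<lambda>q. norm (binomial_term c d q)) summable_on (SIGMA \<beta>:UNIV. binomial_choices \<beta>)"
proof -
  have norm_inner: "(\<Sum>p\<in>binomial_choices \<beta>. norm (binomial_term c d (\<beta>, p)))
      \<le> K * (\<Prod>ox\<in>UNIV. (l1_coord d ox / \<rho>) ^ \<beta> ox)" for \<beta>
  proof -
    have "(\<Sum>p\<in>binomial_choices \<beta>. norm (binomial_term c d (\<beta>, p))) = norm (c \<beta>) * (\<Prod>ox\<in>UNIV. l1_coord d ox ^ \<beta> ox)"
      by (simp add: binomial_term_def sum_norm_binomial_expansion[symmetric] sum_distrib_left norm_mult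
          mult.left_commute)
    also have "\<dots> \<le> K / \<rho> ^ sum \<beta> UNIV * (\<Prod>ox\<in>UNIV. l1_coord d ox ^ \<beta> ox)"
      by (intro mult_right_mono c_bound prod_nonneg) (simp add: l1_coord_def split: option.split)
    also have "\<dots> = K * (\<Prod>ox\<in>UNIV. (l1_coord d ox / \<rho>) ^ \<beta> ox)"
      by (simp add: power_sum power_divide prod_dividef)
    finally show ?thesis .
  qed
  have "(\<lambda>\<beta>. K * (\<Prod>ox\<in>UNIV. (l1_coord d ox / \<rho>) ^ \<beta> ox)) summable_on UNIV"
    using d \<rho> by (intro summable_on_cmult_right summable_on_prod_power)
      (auto simp: l1_coord_def split: option.split)
  then have "(\<lambda>\<beta>. norm (\<Sum>p\<in>binomial_choices \<beta>. norm (binomial_term c d (\<beta>, p)))) summable_on UNIV"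
    by (rule Infinite_Sum.abs_summable_on_comparison_test') (simp add: sum_nonneg norm_inner)
  then show ?thesis
    unfolding Infinite_Sum.abs_summable_on_Sigma_iff by (simp add: infsum_finite)
qed

text \<open>Expand the complex monomials binomially and regroup; this is legitimate because the expanded
  double series still converges absolutely on the smaller ball.\<close>

lemma has_sum_real_coeff:
  fixes c :: "('n::finite option \<Rightarrow> nat) \<Rightarrow> complex" and f :: "complex^('n option) \<Rightarrow> complex"
    and x0 y :: "real \<times> (complex^'n)"
  assumes \<rho>: "0 < \<rho>"
    and c_bound: "\<And>\<beta>. norm (c \<beta>) \<le> K / \<rho> ^ sum \<beta> UNIV"
    and c_sum: "\<And>w. w \<in> polydisc (complexify x0) \<rho> \<Longrightarrow>
       ((\<lambda>\<beta>. c \<beta> * complex_monomial (w - complexify x0) \<beta>) has_sum f w) UNIV"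
    and y: "y \<in> ball x0 (\<rho> / 2)"
  shows "((\<lambda>\<alpha>. real_monomial (y - x0) \<alpha> *\<^sub>R real_coeff c \<alpha>) has_sum f (complexify y)) multi_indices"
proof -
  define d where "d = y - x0"
  have d_small: "l1_coord d ox < \<rho>" for ox
    using l1_coord_le[of d ox] y by (simp add: d_def dist_norm norm_minus_commute)
  have "norm (complexify y $ ox - complexify x0 $ ox) < \<rho>" for ox
    using order.strict_trans1[OF norm_complexify_le_l1_coord d_small]
    by (simp add: d_def flip: complexify_diff)
  then have "complexify y \<in> polydisc (complexify x0) \<rho>"
    by (simp add: polydisc_def dist_norm norm_minus_commute)
  then have "((\<lambda>\<beta>. c \<beta> * complex_monomial (complexify d) \<beta>) has_sum f (complexify y)) UNIV"
    unfolding d_def complexify_diff[symmetric] by (rule c_sum)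
  then have "(binomial_term c d has_sum f (complexify y)) (SIGMA \<beta>:UNIV. binomial_choices \<beta>)"
    by (rule has_sum_SigmaI[OF has_sum_binomial_term _
          abs_summable_summable[OF abs_summable_binomial_term[OF \<rho> c_bound d_small]]])
  then have "((\<lambda>\<alpha>. binomial_term c d (binomial_index \<alpha>)) has_sum f (complexify y)) multi_indices"
    by (simp add: has_sum_reindex_bij_betw[OF bij_betw_binomial_index])
  then show ?thesis
    by (rule has_sum_cong[THEN iffD1, rotated]) (simp add: binomial_term_binomial_index d_def)
qed

section \<open>The rescaled family\<close>

lemma norm_vector_scalar_mult: "norm (c *s (x :: complex^'n)) = norm c * norm x"
  by (simp add: norm_vec_def norm_mult L2_set_right_distrib)

lemma bounded_linear_vector_scalar_mult_left: "bounded_linear (\<lambda>h::complex. h *s (v :: complex^'n))"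
  by (simp add: linear_conv_bounded_linear[symmetric] linear_iff vec_eq_iff algebra_simps scalar_mult_eq_scaleR)

lemma bounded_linear_vector_scalar_mult_right: "bounded_linear (\<lambda>v :: complex^'n. c *s v)"
  by (simp add: linear_conv_bounded_linear[symmetric] linear_iff vec_eq_iff algebra_simps)

lemma continuous_on_vector_scalar_mult [continuous_intros]:
  fixes f :: "'a::topological_space \<Rightarrow> complex" and g :: "'a \<Rightarrow> complex^'n"
  assumes "continuous_on S f" "continuous_on S g"
  shows "continuous_on S (\<lambda>x. f x *s g x)"
  unfolding vector_scalar_mult_def
  by (intro continuous_on_vec_lambda continuous_on_mult assms continuous_on_component)

lemma linear_form_smult: "linear_form A (c *s z) = c *s linear_form A z"
  by (simp add: linear_form_def vec_eq_iff vector_matrix_mult_def sum_distrib_left mult_ac)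

lemma bounded_linear_linear_form: "bounded_linear (linear_form A)"
  by (simp add: linear_conv_bounded_linear[symmetric] linear_iff linear_form_def vec_eq_iff
      vector_matrix_mult_def sum.distrib algebra_simps scaleR_sum_right)

lemma continuous_on_holomorphic_several: "holomorphic_several U f \<Longrightarrow> continuous_on U f"
  unfolding holomorphic_several_def
  by (meson continuous_at_imp_continuous_on has_derivative_continuous)

lemma holomorphic_several_subset:
  "holomorphic_several U f \<Longrightarrow> V \<subseteq> U \<Longrightarrow> holomorphic_several V f"
  by (auto simp: holomorphic_several_def)

lemma has_field_derivative_along_line:
  fixes G :: "complex^'n \<Rightarrow> complex^'m"
  assumes L: "(G has_derivative L) (at (p + \<eta> *s v))" and hom: "\<And>c x. L (c *s x) = c *s L x"
  shows "((\<lambda>\<eta>. G (p + \<eta> *s v) $ i) has_field_derivative L v $ i) (at \<eta>)"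
proof -
  have "((\<lambda>\<eta>. p + \<eta> *s v) has_derivative (\<lambda>h. h *s v)) (at \<eta>)"
    using bounded_linear_vector_scalar_mult_left[of v]
    by (intro derivative_eq_intros) (auto simp: bounded_linear_imp_has_derivative)
  from diff_chain_at[OF this L] have "((\<lambda>\<eta>. G (p + \<eta> *s v) $ i) has_derivative (\<lambda>h. L (h *s v) $ i)) (at \<eta>)"
    using bounded_linear.has_derivative[OF bounded_linear_vec_nth] by (auto simp: o_def)
  then show ?thesis
    unfolding has_field_derivative_def
    by (rule has_derivative_eq_rhs) (simp add: hom fun_eq_iff mult.commute)
qed

lemma holomorphic_on_line:
  fixes G :: "complex^'n \<Rightarrow> complex^'m"
  assumes "holomorphic_several U G" and "open S" and "\<And>\<eta>. \<eta> \<in> S \<Longrightarrow> p + \<eta> *s v \<in> U"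
  shows "(\<lambda>\<eta>. G (p + \<eta> *s v) $ i) holomorphic_on S"
  unfolding holomorphic_on_open[OF \<open>open S\<close>]
proof
  fix \<eta> assume "\<eta> \<in> S"
  then obtain L where "(G has_derivative L) (at (p + \<eta> *s v))" "\<forall>c x. L (c *s x) = c *s L x"
    using assms unfolding holomorphic_several_def by blast
  then show "\<exists>f'. ((\<lambda>\<eta>. G (p + \<eta> *s v) $ i) has_field_derivative f') (at \<eta>)"
    by (blast intro: has_field_derivative_along_line)
qed

definition complex_rescaling ::
  "(complex^'n \<Rightarrow> complex^'n) \<Rightarrow> complex^'n^'n \<Rightarrow> complex \<Rightarrow> complex^'n \<Rightarrow> complex^'n" where
  "complex_rescaling \<Omega> A s z = (if s = 0 then linear_form A z else inverse s *s \<Omega> (s *s z))"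

lemma of_real_vector_scalar_mult: "of_real t *s (z :: complex^'n) = t *\<^sub>R z"
  unfolding vec_eq_iff by (simp add: scaleR_conv_of_real[where 'a = complex])

lemma rescaled_form_eq_complex_rescaling: "rescaled_form \<Omega> A t = complex_rescaling \<Omega> A (of_real t)"
  by (simp add: fun_eq_iff rescaled_form_def complex_rescaling_def of_real_vector_scalar_mult
      flip: of_real_inverse)

lemma holomorphic_several_complex_rescaling:
  fixes \<Omega> :: "complex^'n \<Rightarrow> complex^'n"
  assumes holo: "holomorphic_several (ball 0 r) \<Omega>"
  shows "holomorphic_several {z. s *s z \<in> ball 0 r} (complex_rescaling \<Omega> A s)"
  unfolding holomorphic_several_def
proof
  fix z :: "complex^'n" assume z: "z \<in> {z. s *s z \<in> ball 0 r}"
  show "\<exists>L. (complex_rescaling \<Omega> A s has_derivative L) (at z) \<and> (\<forall>c v. L (c *s v) = c *s L v)"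
  proof (cases "s = 0")
    case True
    then have "complex_rescaling \<Omega> A s = linear_form A"
      by (simp add: fun_eq_iff complex_rescaling_def)
    then show ?thesis
      by (intro exI[of _ "linear_form A"])
         (simp add: bounded_linear_imp_has_derivative[OF bounded_linear_linear_form] linear_form_smult)
  next
    case False
    obtain L where L: "(\<Omega> has_derivative L) (at (s *s z))" and hom: "\<forall>c v. L (c *s v) = c *s L v"
      using holo z unfolding holomorphic_several_def by blast
    have "((\<lambda>z. s *s z) has_derivative (\<lambda>v. s *s v)) (at z)"
      by (rule bounded_linear_imp_has_derivative[OF bounded_linear_vector_scalar_mult_right])
    from diff_chain_at[OF this L]
    have "((\<lambda>z. inverse s *s \<Omega> (s *s z)) has_derivative (\<lambda>v. inverse s *s L (s *s v))) (at z)"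
      using bounded_linear.has_derivative[OF bounded_linear_vector_scalar_mult_right] by (auto simp: o_def)
    moreover have "complex_rescaling \<Omega> A s = (\<lambda>z. inverse s *s \<Omega> (s *s z))"
      using False by (simp add: fun_eq_iff complex_rescaling_def)
    ultimately show ?thesis
      using hom by (intro exI[of _ "\<lambda>v. inverse s *s L (s *s v)"]) (simp add: vector_smult_assoc mult.commute)
  qed
qed

lemma holomorphic_several_rescaled_form:
  fixes \<Omega> :: "complex^'n \<Rightarrow> complex^'n"
  assumes "holomorphic_several (ball 0 r) \<Omega>" and t: "t \<in> {0..1}"
  shows "holomorphic_several (ball 0 r) (rescaled_form \<Omega> A t)"
proof -
  have "norm (of_real t *s z) \<le> norm z" for z :: "complex^'n"
    using t by (simp add: norm_vector_scalar_mult mult_left_le_one_le)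
  then have "norm (of_real t *s z) < r" if "norm z < r" for z :: "complex^'n"
    using that by (rule le_less_trans)
  then have "ball 0 r \<subseteq> {z :: complex^'n. of_real t *s z \<in> ball 0 r}"
    by (simp add: subset_iff dist_norm)
  then show ?thesis
    unfolding rescaled_form_eq_complex_rescaling
    by (rule holomorphic_several_subset[OF holomorphic_several_complex_rescaling[OF assms(1)]])
qed

text \<open>In the scaling variable, \<open>s \<mapsto> \<Omega>\<^sup>s(z)\<close> is the difference quotient of \<open>s \<mapsto> \<Omega>(s z)\<close> at \<open>0\<close>,
  whose singularity is removable.\<close>

lemma holomorphic_on_complex_rescaling_scale:
  fixes \<Omega> :: "complex^'n \<Rightarrow> complex^'n"
  assumes holo: "holomorphic_several (ball 0 r) \<Omega>"
    and linpart: "(\<Omega> has_derivative linear_form A) (at 0)" and \<Omega>0: "\<Omega> 0 = 0"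
  shows "(\<lambda>s. complex_rescaling \<Omega> A s z $ i) holomorphic_on {s. s *s z \<in> ball 0 r}"
proof -
  define S where "S = {s. s *s z \<in> ball 0 r}"
  define h where "h s = \<Omega> (0 + s *s z) $ i" for s
  have "open S"
    unfolding S_def mem_ball
    by (intro open_Collect_less continuous_intros continuous_on_id continuous_on_const)
  moreover have "h holomorphic_on S"
    unfolding h_def by (rule holomorphic_on_line[OF holo]) (use \<open>open S\<close> in \<open>auto simp: S_def\<close>)
  ultimately have pole: "(\<lambda>s. if s = 0 then deriv h 0 else (h s - h 0) / (s - 0)) holomorphic_on S"
    by (intro pole_lemma_open)
  have deriv0: "deriv h 0 = linear_form A z $ i"
    unfolding h_def
    by (intro DERIV_imp_deriv has_field_derivative_along_line) (simp_all add: linpart linear_form_smult)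
  show ?thesis
    using pole unfolding S_def
    by (rule holomorphic_transform) (simp add: deriv0 h_def \<Omega>0 complex_rescaling_def divide_inverse mult.commute)
qed

definition vec_tail :: "'a^('n option) \<Rightarrow> 'a^'n" where
  "vec_tail w = (\<chi> j. w $ Some j)"

lemma vec_tail_nth [simp]: "vec_tail w $ j = w $ Some j"
  by (simp add: vec_tail_def)

lemma vec_tail_complexify [simp]: "vec_tail (complexify (t, z)) = z"
  by (simp add: vec_eq_iff)

lemma bounded_linear_vec_tail: "bounded_linear (vec_tail :: complex^('n::finite option) \<Rightarrow> complex^'n)"
  by (simp add: linear_conv_bounded_linear[symmetric] linear_iff vec_eq_iff)

lemma continuous_on_vec_tail [continuous_intros]:
  "continuous_on S f \<Longrightarrow> continuous_on S (\<lambda>x. vec_tail (f x))"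
  unfolding vec_tail_def by (intro continuous_on_vec_lambda continuous_on_component)

definition joint_rescaling ::
  "(complex^'n \<Rightarrow> complex^'n) \<Rightarrow> complex^'n^'n \<Rightarrow> complex^('n option) \<Rightarrow> complex^'n" where
  "joint_rescaling \<Omega> A w = complex_rescaling \<Omega> A (w $ None) (vec_tail w)"

definition rescaling_domain :: "real \<Rightarrow> (complex^('n::finite option)) set" where
  "rescaling_domain r = {w. w $ None *s vec_tail w \<in> ball 0 r}"

lemma joint_rescaling_complexify: "joint_rescaling \<Omega> A (complexify (t, z)) = rescaled_form \<Omega> A t z"
  by (simp add: joint_rescaling_def rescaled_form_eq_complex_rescaling)

lemma open_rescaling_domain: "open (rescaling_domain r)"
  unfolding rescaling_domain_def mem_ball
  by (intro open_Collect_less continuous_intros continuous_on_id continuous_on_const)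

lemma norm_complex_rescaling_sub_le:
  assumes \<Omega>0: "\<Omega> 0 = 0"
  shows "norm (complex_rescaling \<Omega> A s z - linear_form A z)
    \<le> norm (\<Omega> (s *s z) - linear_form A (s *s z)) / norm (s *s z) * norm z"
proof (cases "s = 0 \<or> z = 0")
  case True
  moreover have "linear_form A 0 = 0"
    by (simp add: linear_form_def)
  ultimately show ?thesis
    using \<Omega>0 by (auto simp: complex_rescaling_def)
next
  case False
  then have "complex_rescaling \<Omega> A s z - linear_form A z = inverse s *s (\<Omega> (s *s z) - linear_form A (s *s z))"
    by (simp add: complex_rescaling_def linear_form_smult vector_ssub_ldistrib vector_smult_assoc)
  then have "norm (complex_rescaling \<Omega> A s z - linear_form A z)
      = norm (inverse s) * norm (\<Omega> (s *s z) - linear_form A (s *s z))"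
    by (simp only: norm_vector_scalar_mult)
  also have "\<dots> = norm (\<Omega> (s *s z) - linear_form A (s *s z)) / norm (s *s z) * norm z"
    using False by (simp add: norm_vector_scalar_mult norm_inverse norm_divide field_simps)
  finally show ?thesis
    by simp
qed

lemma isCont_joint_rescaling_at_zero:
  fixes \<Omega> :: "complex^'n \<Rightarrow> complex^'n"
  assumes linpart: "(\<Omega> has_derivative linear_form A) (at 0)" and \<Omega>0: "\<Omega> 0 = 0"
    and w0: "w0 $ None = 0"
  shows "isCont (joint_rescaling \<Omega> A) w0"
proof -
  define R where "R p = norm (\<Omega> p - linear_form A p) / norm p" for p
  have "(R \<longlongrightarrow> 0) (at 0)"
    using linpart \<Omega>0 by (simp add: has_derivative_at R_def[abs_def])
  then have R: "isCont R 0"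
    by (simp add: isCont_def R_def)
  have "continuous_on UNIV (\<lambda>w::complex^('n option). w $ None *s vec_tail w)"
    by (intro continuous_intros continuous_on_id)
  then have "((\<lambda>w. w $ None *s vec_tail w) \<longlongrightarrow> w0 $ None *s vec_tail w0) (at w0)"
    by (simp add: continuous_on_eq_continuous_at isCont_def)
  then have "((\<lambda>w. R (w $ None *s vec_tail w)) \<longlongrightarrow> R 0) (at w0)"
    using w0 by (simp add: isCont_tendsto_compose[OF R])
  moreover have tail: "(vec_tail \<longlongrightarrow> vec_tail w0) (at w0)"
    by (rule bounded_linear.tendsto[OF bounded_linear_vec_tail tendsto_ident_at])
  ultimately have "((\<lambda>w. R (w $ None *s vec_tail w) * norm (vec_tail w)) \<longlongrightarrow> R 0 * norm (vec_tail w0)) (at w0)"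
    by (intro tendsto_mult tendsto_norm)
  then have "((\<lambda>w. R (w $ None *s vec_tail w) * norm (vec_tail w)) \<longlongrightarrow> 0) (at w0)"
    by (simp add: R_def)
  then have "((\<lambda>w. joint_rescaling \<Omega> A w - linear_form A (vec_tail w)) \<longlongrightarrow> 0) (at w0)"
    by (rule Lim_null_comparison[rotated], intro always_eventually allI)
       (unfold R_def joint_rescaling_def, rule norm_complex_rescaling_sub_le[of \<Omega>, OF \<Omega>0])
  moreover have "((\<lambda>w. linear_form A (vec_tail w)) \<longlongrightarrow> linear_form A (vec_tail w0)) (at w0)"
    using tail by (rule bounded_linear.tendsto[OF bounded_linear_linear_form])
  ultimately have "(joint_rescaling \<Omega> A \<longlongrightarrow> linear_form A (vec_tail w0)) (at w0)"
    by (rule Lim_transform[rotated])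
  then show ?thesis
    using w0 by (simp add: isCont_def joint_rescaling_def complex_rescaling_def)
qed

lemma continuous_on_joint_rescaling:
  fixes \<Omega> :: "complex^'n \<Rightarrow> complex^'n"
  assumes holo: "holomorphic_several (ball 0 r) \<Omega>"
    and linpart: "(\<Omega> has_derivative linear_form A) (at 0)" and \<Omega>0: "\<Omega> 0 = 0"
  shows "continuous_on (rescaling_domain r) (joint_rescaling \<Omega> A)"
proof (rule continuous_at_imp_continuous_on, rule ballI)
  fix w0 :: "complex^('n option)" assume w0: "w0 \<in> rescaling_domain r"
  show "isCont (joint_rescaling \<Omega> A) w0"
  proof (cases "w0 $ None = 0")
    case True
    then show ?thesis
      by (rule isCont_joint_rescaling_at_zero[OF linpart \<Omega>0])
  next
    case False
    define D :: "(complex^('n option)) set" where "D = rescaling_domain r \<inter> {w. w $ None \<noteq> 0}"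
    have "open D"
      unfolding D_def
      by (intro open_Int open_rescaling_domain open_Collect_neq continuous_intros continuous_on_id)
    have "continuous_on D (\<lambda>w. inverse (w $ None) *s \<Omega> (w $ None *s vec_tail w))"
      by (intro continuous_intros continuous_on_id continuous_on_compose2[OF continuous_on_holomorphic_several[OF holo]])
         (auto simp: D_def rescaling_domain_def)
    then have "continuous_on D (joint_rescaling \<Omega> A)"
      by (rule continuous_on_cong[THEN iffD1, rotated 2])
         (simp_all add: D_def joint_rescaling_def complex_rescaling_def)
    moreover have "w0 \<in> D"
      using False w0 by (simp add: D_def)
    ultimately show ?thesis
      using \<open>open D\<close> continuous_on_eq_continuous_at by blast
  qed
qed

lemma holomorphic_joint_rescaling_coordinate:
  fixes \<Omega> :: "complex^'n \<Rightarrow> complex^'n"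
  assumes holo: "holomorphic_several (ball 0 r) \<Omega>"
    and linpart: "(\<Omega> has_derivative linear_form A) (at 0)" and \<Omega>0: "\<Omega> 0 = 0"
    and T: "open T" and dom: "\<And>\<zeta>. \<zeta> \<in> T \<Longrightarrow> vec_upd w j \<zeta> \<in> rescaling_domain r"
  shows "(\<lambda>\<zeta>. joint_rescaling \<Omega> A (vec_upd w j \<zeta>) $ i) holomorphic_on T"
proof (cases j)
  case None
  have "(\<lambda>s. complex_rescaling \<Omega> A s (vec_tail w) $ i) holomorphic_on T"
    using dom None
    by (intro holomorphic_on_subset[OF holomorphic_on_complex_rescaling_scale[OF holo linpart \<Omega>0]])
       (auto simp: rescaling_domain_def vec_tail_def)
  moreover have "vec_tail (vec_upd w None \<zeta>) = vec_tail w" for \<zeta>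
    by (simp add: vec_eq_iff)
  ultimately show ?thesis
    using None by (simp add: joint_rescaling_def)
next
  case (Some k)
  define p where "p = vec_tail (vec_upd w j 0)"
  have tail: "vec_tail (vec_upd w j \<zeta>) = p + \<zeta> *s axis k 1" for \<zeta>
    by (simp add: Some p_def vec_eq_iff axis_def)
  have "(\<lambda>\<zeta>. complex_rescaling \<Omega> A (w $ None) (p + \<zeta> *s axis k 1) $ i) holomorphic_on T"
    using dom
    by (intro holomorphic_on_line[OF holomorphic_several_complex_rescaling[OF holo] T])
       (auto simp: rescaling_domain_def Some tail[symmetric])
  then show ?thesis
    by (simp add: joint_rescaling_def Some tail[unfolded Some])
qed

lemma has_sum_vec:
  fixes f :: "'a \<Rightarrow> complex^'n"
  assumes "\<And>i. ((\<lambda>x. f x $ i) has_sum s $ i) A"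
  shows "(f has_sum s) A"
proof -
  have "((\<lambda>X. \<chi> i. sum (\<lambda>x. f x $ i) X) \<longlongrightarrow> (\<chi> i. s $ i)) (finite_subsets_at_top A)"
    using assms unfolding has_sum_def by (intro tendsto_vec_lambda) auto
  moreover have "(\<lambda>X. \<chi> i. sum (\<lambda>x. f x $ i) X) = sum f"
    by (auto simp: vec_eq_iff fun_eq_iff)
  ultimately show ?thesis
    unfolding has_sum_def by simp
qed

lemma separately_holomorphic_polydisc_joint_rescaling:
  fixes \<Omega> :: "complex^'n \<Rightarrow> complex^'n"
  assumes holo: "holomorphic_several (ball 0 r) \<Omega>"
    and linpart: "(\<Omega> has_derivative linear_form A) (at 0)" and \<Omega>0: "\<Omega> 0 = 0"
    and \<rho>: "0 < \<rho>" and dom: "cpolydisc a \<rho> \<subseteq> rescaling_domain r"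
  shows "\<exists>M. separately_holomorphic_polydisc (\<lambda>w. joint_rescaling \<Omega> A w $ i) a \<rho> M"
proof -
  have cont: "continuous_on (cpolydisc a \<rho>) (\<lambda>w. joint_rescaling \<Omega> A w $ i)"
    by (intro continuous_on_component continuous_on_subset[OF continuous_on_joint_rescaling[OF holo linpart \<Omega>0]
          dom])
  then obtain M where "\<And>w. w \<in> cpolydisc a \<rho> \<Longrightarrow> norm (joint_rescaling \<Omega> A w $ i) \<le> M"
    using compact_imp_bounded[OF compact_continuous_image[OF cont compact_cpolydisc]] \<rho>
    unfolding bounded_iff by fastforce
  moreover have "(\<lambda>\<zeta>. joint_rescaling \<Omega> A (vec_upd w j \<zeta>) $ i) holomorphic_on ball (a $ j) \<rho>"
    if "w \<in> cpolydisc a \<rho>" for w j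
    using that by (intro holomorphic_joint_rescaling_coordinate[OF holo linpart \<Omega>0 open_ball]
        subsetD[OF dom] vec_upd_in_cpolydisc) auto
  ultimately show ?thesis
    using \<rho> cont by (intro exI[of _ M], unfold_locales) auto
qed

lemma rescaled_form_local_expansion:
  fixes \<Omega> :: "complex^'n \<Rightarrow> complex^'n" and x0 :: "real \<times> (complex^'n)"
  assumes holo: "holomorphic_several (ball 0 r) \<Omega>"
    and linpart: "(\<Omega> has_derivative linear_form A) (at 0)" and \<Omega>0: "\<Omega> 0 = 0"
    and x0: "complexify x0 \<in> rescaling_domain r"
  shows "\<exists>e>0. \<exists>C. \<forall>y\<in>ball x0 e.
    ((\<lambda>\<alpha>. real_monomial (y - x0) \<alpha> *\<^sub>R C \<alpha>) has_sum joint_rescaling \<Omega> A (complexify y)) multi_indices"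
proof -
  obtain e where e: "0 < e" "cball (complexify x0) e \<subseteq> rescaling_domain r"
    using open_rescaling_domain x0 open_contains_cball by blast
  define \<rho> where "\<rho> = e / CARD('n option)"
  have \<rho>: "0 < \<rho>"
    using e by (simp add: \<rho>_def)
  have dom: "cpolydisc (complexify x0) \<rho> \<subseteq> rescaling_domain r"
    using cpolydisc_subset_cball[of \<rho> "complexify x0"] \<rho> e by (simp add: \<rho>_def)
  have "\<exists>C. \<forall>y\<in>ball x0 (\<rho> / 2).
      ((\<lambda>\<alpha>. real_monomial (y - x0) \<alpha> *\<^sub>R C \<alpha>) has_sum joint_rescaling \<Omega> A (complexify y) $ i) multi_indices"
    for i
  proof -
    obtain M where "separately_holomorphic_polydisc (\<lambda>w. joint_rescaling \<Omega> A w $ i) (complexify x0) \<rho> M"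
      using separately_holomorphic_polydisc_joint_rescaling[OF holo linpart \<Omega>0 \<rho> dom] by blast
    then obtain c where c_bound: "\<And>\<beta>. norm (c \<beta>) \<le> M / \<rho> ^ sum \<beta> UNIV"
      and c_sum: "\<And>w. w \<in> polydisc (complexify x0) \<rho> \<Longrightarrow>
        ((\<lambda>\<beta>. c \<beta> * complex_monomial (w - complexify x0) \<beta>) has_sum joint_rescaling \<Omega> A w $ i) UNIV"
      using osgood_expansion by blast
    show ?thesis
      using has_sum_real_coeff[OF \<rho> c_bound c_sum] by blast
  qed
  then obtain C where C: "\<And>i y. y \<in> ball x0 (\<rho> / 2) \<Longrightarrow>
      ((\<lambda>\<alpha>. real_monomial (y - x0) \<alpha> *\<^sub>R C i \<alpha>) has_sum joint_rescaling \<Omega> A (complexify y) $ i) multi_indices"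
    by metis
  show ?thesis
    using \<rho> C by (intro exI[of _ "\<rho> / 2"] exI[of _ "\<lambda>\<alpha>. \<chi> i. C i \<alpha>"] conjI ballI has_sum_vec) auto
qed

lemma real_analytic_on_rescaled_form:
  fixes \<Omega> :: "complex^'n \<Rightarrow> complex^'n"
  assumes holo: "holomorphic_several (ball 0 r) \<Omega>"
    and linpart: "(\<Omega> has_derivative linear_form A) (at 0)" and \<Omega>0: "\<Omega> 0 = 0"
  shows "real_analytic_on ({0..1} \<times> ball 0 r) (\<lambda>(t, z). rescaled_form \<Omega> A t z)"
  unfolding real_analytic_on_def
proof
  fix x0 :: "real \<times> (complex^'n)" assume "x0 \<in> {0..1} \<times> ball 0 r"
  then have "norm (of_real (fst x0) *s snd x0) < r"
    by (auto simp: norm_vector_scalar_mult intro: le_less_trans[OF mult_left_le_one_le])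
  then have "complexify x0 \<in> rescaling_domain r"
    by (simp add: rescaling_domain_def vec_tail_def complexify_def)
  then obtain e C where "0 < e" and C: "\<And>y. y \<in> ball x0 e \<Longrightarrow>
      ((\<lambda>\<alpha>. real_monomial (y - x0) \<alpha> *\<^sub>R C \<alpha>) has_sum joint_rescaling \<Omega> A (complexify y)) multi_indices"
    using rescaled_form_local_expansion[OF holo linpart \<Omega>0] by blast
  show "\<exists>e>0. \<exists>c. (\<forall>y\<in>ball x0 e. (\<lambda>\<alpha>. (\<Prod>b\<in>Basis. ((y - x0) \<bullet> b) ^ \<alpha> b) *\<^sub>R c \<alpha>) summable_on multi_indices) \<and>
      (\<forall>y\<in>({0..1} \<times> ball 0 r) \<inter> ball x0 e.
         ((\<lambda>\<alpha>. (\<Prod>b\<in>Basis. ((y - x0) \<bullet> b) ^ \<alpha> b) *\<^sub>R c \<alpha>) has_sum (\<lambda>(t, z). rescaled_form \<Omega> A t z) y)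
           multi_indices)"
    using \<open>0 < e\<close> C unfolding real_monomial_def
    by (intro exI[of _ e] exI[of _ C] conjI ballI)
       (auto simp: summable_on_def joint_rescaling_complexify[symmetric] split_beta)
qed

section \<open>Transversality\<close>

lemma oneform_apply_scaleR_left: "oneform_apply (c *\<^sub>R w) z = of_real c * oneform_apply w z"
  by (simp add: oneform_apply_def scaleR_conv_of_real[where 'a = complex] sum_distrib_left mult_ac)

lemma oneform_apply_scaleR_right: "oneform_apply w (c *\<^sub>R z) = of_real c * oneform_apply w z"
  by (simp add: oneform_apply_def scaleR_conv_of_real[where 'a = complex] sum_distrib_left mult_ac)

lemma bounded_linear_oneform_apply_left: "bounded_linear (\<lambda>w. oneform_apply w (z :: complex^'n))"
  by (simp add: linear_conv_bounded_linear[symmetric] linear_iff oneform_apply_def sum.distrib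
      algebra_simps scaleR_sum_right)

lemma transverse_sphere_at_if_radial:
  fixes w z :: "complex^'n"
  assumes w: "oneform_apply w z = 0" and z: "norm z = 1"
  shows "transverse_sphere_at w z"
  unfolding transverse_sphere_at_def
proof (intro set_eqI iffI)
  fix v :: "complex^'n"
  define a where "a = (v \<bullet> z) *\<^sub>R z"
  have "z \<bullet> z = 1"
    using z by (simp flip: power2_norm_eq_inner)
  then have "a \<in> oneform_kernel w" "v - a \<in> sphere_tangent z"
    by (simp_all add: a_def oneform_kernel_def oneform_apply_scaleR_right w sphere_tangent_def inner_diff_left)
  then show "v \<in> {a + b |a b. a \<in> oneform_kernel w \<and> b \<in> sphere_tangent z}"
    by force
qed simp

text \<open>Differentiating \<open>\<Omega>(s z) \<cdot> z = 0\<close> at \<open>s = 0\<close>.\<close>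

lemma oneform_apply_linear_form_radial:
  fixes \<Omega> :: "complex^'n \<Rightarrow> complex^'n"
  assumes radial: "\<forall>z\<in>ball 0 r. oneform_apply (\<Omega> z) z = 0" and r: "0 < r"
    and linpart: "(\<Omega> has_derivative linear_form A) (at 0)" and \<Omega>0: "\<Omega> 0 = 0"
  shows "oneform_apply (linear_form A z) z = 0"
proof -
  define g where "g s = oneform_apply (\<Omega> (s *\<^sub>R z)) z" for s :: real
  define S where "S = {s :: real. s *\<^sub>R z \<in> ball 0 r}"
  have "open S"
    unfolding S_def mem_ball by (intro open_Collect_less continuous_intros)
  have "0 \<in> S"
    using r by (simp add: S_def)
  have g0: "g s = 0" if "s \<in> S" for s
  proof (cases "s = 0")
    case True
    then show ?thesis
      by (simp add: g_def \<Omega>0 oneform_apply_def)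
  next
    case False
    have "of_real s * g s = 0"
      using radial that by (simp add: g_def S_def oneform_apply_scaleR_right[symmetric])
    with False show ?thesis
      by simp
  qed
  have "((\<lambda>s. s *\<^sub>R z) has_derivative (\<lambda>s. s *\<^sub>R z)) (at 0)"
    by (intro derivative_eq_intros) simp_all
  moreover have "(\<Omega> has_derivative linear_form A) (at ((\<lambda>s. s *\<^sub>R z) 0))"
    using linpart by simp
  ultimately have "((\<lambda>s. \<Omega> (s *\<^sub>R z)) has_derivative (\<lambda>s. linear_form A (s *\<^sub>R z))) (at 0)"
    using diff_chain_at by (fastforce simp: o_def)
  then have "(g has_derivative (\<lambda>s. oneform_apply (linear_form A (s *\<^sub>R z)) z)) (at 0)"
    unfolding g_def by (rule bounded_linear.has_derivative[OF bounded_linear_oneform_apply_left])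
  moreover have "(g has_derivative (\<lambda>_. 0)) (at 0)"
    by (rule has_derivative_transform_within_open[OF has_derivative_const \<open>open S\<close> \<open>0 \<in> S\<close>])
       (simp add: g0)
  ultimately have "(\<lambda>s. oneform_apply (linear_form A (s *\<^sub>R z)) z) = (\<lambda>_. 0)"
    by (rule has_derivative_unique)
  then show ?thesis
    by (metis scaleR_one)
qed

lemma oneform_apply_rescaled_form_radial:
  fixes \<Omega> :: "complex^'n \<Rightarrow> complex^'n"
  assumes radial: "\<forall>z\<in>ball 0 r. oneform_apply (\<Omega> z) z = 0" and r: "0 < r"
    and linpart: "(\<Omega> has_derivative linear_form A) (at 0)" and \<Omega>0: "\<Omega> 0 = 0"
    and t: "t \<in> {0..1}" and z: "z \<in> ball 0 r"
  shows "oneform_apply (rescaled_form \<Omega> A t z) z = 0"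
proof (cases "t = 0")
  case True
  then show ?thesis
    using oneform_apply_linear_form_radial[OF radial r linpart \<Omega>0] by (simp add: rescaled_form_def)
next
  case False
  have "norm (t *\<^sub>R z) \<le> norm z"
    using t by (simp add: mult_left_le_one_le)
  then have "t *\<^sub>R z \<in> ball 0 r"
    using z by simp
  then have "oneform_apply (\<Omega> (t *\<^sub>R z)) (t *\<^sub>R z) = 0"
    using radial by blast
  then show ?thesis
    using False by (simp add: rescaled_form_def oneform_apply_scaleR_left oneform_apply_scaleR_right)
qed

theorem lemma4p10:
  fixes \<Omega> :: "complex ^ 'n \<Rightarrow> complex ^ 'n"
    and A :: "complex ^ 'n ^ 'n"
    and r :: real
  assumes dim: "even CARD('n)"
    and U: "cball 0 1 \<subseteq> ball (0 :: complex ^ 'n) r"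
    and holo: "holomorphic_several (ball 0 r) \<Omega>"
    and radial: "\<forall>z\<in>ball 0 r. oneform_apply (\<Omega> z) z = 0"
    and transv: "\<forall>z\<in>sphere 0 1. transverse_sphere_at (\<Omega> z) z"
    and zeros: "{z\<in>cball 0 1. \<Omega> z = 0} = {0}"
    and linpart: "(\<Omega> has_derivative linear_form A) (at 0)"
    and nonsing: "det A \<noteq> 0"
  shows "real_analytic_on ({0..1} \<times> ball 0 r) (\<lambda>(t, z). rescaled_form \<Omega> A t z)
       \<and> (\<forall>z\<in>ball 0 r. rescaled_form \<Omega> A 1 z = \<Omega> z)
       \<and> (\<forall>z. rescaled_form \<Omega> A 0 z = linear_form A z)
       \<and> (\<forall>t\<in>{0..1}. holomorphic_several (ball 0 r) (rescaled_form \<Omega> A t))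
       \<and> (\<forall>t\<in>{0..1}. \<forall>z\<in>sphere 0 1. rescaled_form \<Omega> A t z \<noteq> 0 \<longrightarrow>
              transverse_sphere_at (rescaled_form \<Omega> A t z) z)"
proof -
  have \<Omega>0: "\<Omega> 0 = 0"
    using zeros by blast
  have sphere: "sphere 0 1 \<subseteq> ball (0 :: complex^'n) r"
    using U sphere_cball by blast
  have "(0 :: complex^'n) \<in> cball 0 1"
    by simp
  then have "(0 :: complex^'n) \<in> ball 0 r"
    using U by (rule subsetD[rotated])
  then have r: "0 < r"
    by simp
  have "transverse_sphere_at (rescaled_form \<Omega> A t z) z" if "t \<in> {0..1}" "z \<in> sphere 0 1" for t z
    using that sphere
    by (intro transverse_sphere_at_if_radial oneform_apply_rescaled_form_radial[OF radial r linpart \<Omega>0]) auto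
  then show ?thesis
    using real_analytic_on_rescaled_form[OF holo linpart \<Omega>0] holomorphic_several_rescaled_form[OF holo]
    by (simp add: rescaled_form_def)
qed

end
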